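(* Suppose Assumption 1 (context) holds, let $u^*$ be any minimizer of $D$, and let $0\le K_0\le K$ be integers. For ARDCA as in the context, with $\hat x^K=\frac{\sum_{k=K_0}^Kx^*(v^k)/\theta_k}{\sum_{k=K_0}^K1/\theta_k}$ and $\hat y^K=\frac{\sum_{k=K_0}^Kny^k/\theta_k}{\sum_{k=K_0}^K1/\theta_k}$, $$\sqrt{\mathbb{E}_{\xi_K}\left[\left(\|\widetilde\triangle(\hat x^K,\hat y^K)\|_L^*\right)^2\right]}\le\frac{\sqrt{48}\,\widehat n^2\sqrt{(1-\theta_0)(D(u^0)-D(u^* ))+\|u^0-u^*\|_L^2}}{\frac1{\theta_K^2}-\frac1{\theta_{K_0-1}^2}},$$ where $\widetilde\triangle(x,y)=[(A^Tx-y)^T/n,(Bx+b)^T,\max\{0,g_1(x)\},\dots,\max\{0,g_m(x)\}]^T$.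
   Context: Data: integers $n,t\ge1$, $p,m\ge0$; $A\in\mathbb{R}^{t\times n}$ (columns $A_j$), $B\in\mathbb{R}^{p\times t}$ (rows $B_{j,:}$), $b\in\mathbb{R}^p$; $f,\phi_i,g_i$ real-valued. Assumption 1: $f$ $\mu$-strongly convex ($\mu>0$); $\phi_i$ convex, $M$-Lipschitz; $g_i$ convex with subgradients of norm $\le L_{g_i}$; there is $\bar x$ with $g_i(\bar x)<0$ and $B\bar x+b=0$; the problem $\min f(x)+\frac1n\sum\phi_i(A_i^Tx)$ s.t. $Bx+b=0$, $g_i(x)\le0$ has finite optimal value. Dual: $\widehat n=n+p+m$, $\mathbb{D}=\{u:u_{n+p+1},\dots,u_{\widehat n}\ge0\}$, $L_f(x,u)=f(x)+\langle u_{1:n},A^Tx/n\rangle+\langle u_{n+1:n+p},Bx+b\rangle+\sum_iu_{n+p+i}g_i(x)$, $x^*(u)=\arg\min_xL_f(x,u)$, $d(u)=-L_f(x^*(u),u)$; $h_i=\frac1n\phi_i^*$ ($i\le n$), $h_i\equiv0$ ($n<i\le n+p$), $h_i$ = indicator of $[0,\infty)$ ($i>n+p$); $D(u)=d(u)+\sum_ih_i(u_i)$. $L_j=\|A_j\|^2/(n^2\mu)$ ($j\le n$), $\|B_{j-n,:}\|^2/\mu$ ($n<j\le n+p$), $L_{g_{j-n-p}}^2/\mu$ ($j>n+p$); $\|w\|_L=\sqrt{\sum_iL_iw_i^2}$, $\|w\|_L^*=\sqrt{\sum_iw_i^2/L_i}$. ARDCA: $\theta_0=1/\widehat n$, $\theta_{k+1}=\frac{\sqrt{\theta_k^4+4\theta_k^2}-\theta_k^2}{2}$,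 convention $1/\theta_{-1}^2=\widehat n^2-\widehat n$; $z^0=u^0\in\mathbb{D}$; $v^k=\theta_kz^k+(1-\theta_k)u^k$; $\tilde z_i^k=\arg\min_w\widehat n\theta_kL_i(w-z_i^k)^2+\nabla_id(v^k)(w-z_i^k)+h_i(w)$; $i_k$ uniform on $\{1..\widehat n\}$ independent; $z^{k+1}_{i_k}=\tilde z^k_{i_k}$, others unchanged; $u^{k+1}=v^k+\widehat n\theta_k(z^{k+1}-z^k)$; $y_i^k=-2\widehat n\theta_kL_i(\tilde z_i^k-z_i^k)-\nabla_id(v^k)$ ($i\le n$); $\xi_K=\{i_0,\dots,i_K\}$. *)

theory Defs
  imports "HOL-Analysis.Analysis"
begin

(* Primal variable x lives in an arbitrary Euclidean space 'a (t = DIM('a)).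
   Indices are 0-based:  columns A_j (j < n), rows B_j (j < p), constraints g_i (i < m).
   Dual vectors u :: nat => real; only coordinates < nh = n+p+m matter:
   coordinates j < n  <-> u_{1:n},  n <= j < n+p <-> u_{n+1:n+p},  n+p <= j < nh <-> the g-multipliers. *)
record 'a dprob =
  pn :: nat
  pp :: nat
  pm :: nat
  pA :: "nat \<Rightarrow> 'a"
  pB :: "nat \<Rightarrow> 'a"
  pb :: "nat \<Rightarrow> real"
  pf :: "'a \<Rightarrow> real"
  pphi :: "nat \<Rightarrow> real \<Rightarrow> real"
  pg :: "nat \<Rightarrow> 'a \<Rightarrow> real"
  pmu :: real
  pLg :: "nat \<Rightarrow> real"

definition strongly_convex :: "real \<Rightarrow> ('a::real_normed_vector \<Rightarrow> real) \<Rightarrow> bool" where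
  "strongly_convex \<mu> f \<longleftrightarrow> (\<forall>x y. \<forall>s\<in>{0..1}.
     f (s *\<^sub>R x + (1 - s) *\<^sub>R y) \<le> s * f x + (1 - s) * f y - \<mu> / 2 * s * (1 - s) * (norm (x - y))\<^sup>2)"

definition is_subgradient :: "('a::real_inner \<Rightarrow> real) \<Rightarrow> 'a \<Rightarrow> 'a \<Rightarrow> bool" where
  "is_subgradient g x s \<longleftrightarrow> (\<forall>y. g y \<ge> g x + s \<bullet> (y - x))"

definition nh :: "('a, 'b) dprob_scheme \<Rightarrow> nat" where
  "nh P = pn P + pp P + pm P"

definition primal_obj :: "('a::real_inner) dprob \<Rightarrow> 'a \<Rightarrow> real" where
  "primal_obj P x = pf P x + (1 / real (pn P)) * (\<Sum>i<pn P. pphi P i (pA P i \<bullet> x))"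

definition feasible :: "('a::real_inner) dprob \<Rightarrow> 'a \<Rightarrow> bool" where
  "feasible P x \<longleftrightarrow> (\<forall>j<pp P. pB P j \<bullet> x + pb P j = 0) \<and> (\<forall>i<pm P. pg P i x \<le> 0)"

definition assumption1 :: "('a::euclidean_space) dprob \<Rightarrow> bool" where
  "assumption1 P \<longleftrightarrow>
     pn P \<ge> 1 \<and>
     pmu P > 0 \<and> strongly_convex (pmu P) (pf P) \<and>
     (\<exists>M. \<forall>i<pn P. convex_on UNIV (pphi P i) \<and> M-lipschitz_on UNIV (pphi P i)) \<and>
     (\<forall>i<pm P. convex_on UNIV (pg P i) \<and>
        (\<forall>x s. is_subgradient (pg P i) x s \<longrightarrow> norm s \<le> pLg P i)) \<and>
     (\<exists>xb. (\<forall>i<pm P. pg P i xb < 0) \<and> (\<forall>j<pp P. pB P j \<bullet> xb + pb P j = 0)) \<and>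
     bdd_below (primal_obj P ` {x. feasible P x})"

definition dualD :: "('a::real_inner) dprob \<Rightarrow> (nat \<Rightarrow> real) set" where
  "dualD P = {u. \<forall>i. pn P + pp P \<le> i \<and> i < nh P \<longrightarrow> u i \<ge> 0}"

definition Lag :: "('a::real_inner) dprob \<Rightarrow> 'a \<Rightarrow> (nat \<Rightarrow> real) \<Rightarrow> real" where
  "Lag P x u = pf P x
     + (\<Sum>j<pn P. u j * ((pA P j \<bullet> x) / real (pn P)))
     + (\<Sum>j<pp P. u (pn P + j) * (pB P j \<bullet> x + pb P j))
     + (\<Sum>i<pm P. u (pn P + pp P + i) * pg P i x)"

definition xstar :: "('a::real_inner) dprob \<Rightarrow> (nat \<Rightarrow> real) \<Rightarrow> 'a" where
  "xstar P u = (SOME x. \<forall>y. Lag P x u \<le> Lag P y u)"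

definition dfun :: "('a::real_inner) dprob \<Rightarrow> (nat \<Rightarrow> real) \<Rightarrow> real" where
  "dfun P u = - Lag P (xstar P u) u"

(* partial derivative \<nabla>_i d(u); for multiplier coordinates it is taken within [0,\<infinity>) (the domain \<bbbD>) *)
definition gradd :: "('a::real_inner) dprob \<Rightarrow> (nat \<Rightarrow> real) \<Rightarrow> nat \<Rightarrow> real" where
  "gradd P u i = (THE c. ((\<lambda>s. dfun P (u(i := s))) has_real_derivative c)
       (at (u i) within (if i < pn P + pp P then UNIV else {0..})))"

definition conj :: "(real \<Rightarrow> real) \<Rightarrow> real \<Rightarrow> ereal" where
  "conj \<phi> s = (SUP z. ereal (s * z - \<phi> z))"

definition hfun :: "('a::real_inner) dprob \<Rightarrow> nat \<Rightarrow> real \<Rightarrow> ereal" where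
  "hfun P i w = (if i < pn P then ereal (1 / real (pn P)) * conj (pphi P i) w
                 else if i < pn P + pp P then 0
                 else if w \<ge> 0 then 0 else \<infinity>)"

definition Dfun :: "('a::real_inner) dprob \<Rightarrow> (nat \<Rightarrow> real) \<Rightarrow> ereal" where
  "Dfun P u = ereal (dfun P u) + (\<Sum>i<nh P. hfun P i (u i))"

definition Lc :: "('a::real_inner) dprob \<Rightarrow> nat \<Rightarrow> real" where
  "Lc P j = (if j < pn P then (norm (pA P j))\<^sup>2 / ((real (pn P))\<^sup>2 * pmu P)
             else if j < pn P + pp P then (norm (pB P (j - pn P)))\<^sup>2 / pmu P
             else (pLg P (j - pn P - pp P))\<^sup>2 / pmu P)"

definition normL :: "('a::real_inner) dprob \<Rightarrow> (nat \<Rightarrow> real) \<Rightarrow> real" where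
  "normL P w = sqrt (\<Sum>i<nh P. Lc P i * (w i)\<^sup>2)"

definition normL_dual :: "('a::real_inner) dprob \<Rightarrow> (nat \<Rightarrow> real) \<Rightarrow> real" where
  "normL_dual P w = sqrt (\<Sum>i<nh P. (w i)\<^sup>2 / Lc P i)"

fun theta :: "nat \<Rightarrow> nat \<Rightarrow> real" where
  "theta N 0 = 1 / real N"
| "theta N (Suc k) = (sqrt ((theta N k)^4 + 4 * (theta N k)\<^sup>2) - (theta N k)\<^sup>2) / 2"

(* 1/theta_{K0-1}^2 with the convention 1/theta_{-1}^2 = N^2 - N *)
definition inv_theta_sq_prev :: "nat \<Rightarrow> nat \<Rightarrow> real" where
  "inv_theta_sq_prev N K0 = (if K0 = 0 then (real N)\<^sup>2 - real N else 1 / (theta N (K0 - 1))\<^sup>2)"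

definition ztilde :: "('a::real_inner) dprob \<Rightarrow> real \<Rightarrow> (nat \<Rightarrow> real) \<Rightarrow> (nat \<Rightarrow> real) \<Rightarrow> nat \<Rightarrow> real" where
  "ztilde P \<theta> z v i = (SOME w. \<forall>w'.
      ereal (real (nh P) * \<theta> * Lc P i * (w - z i)\<^sup>2 + gradd P v i * (w - z i)) + hfun P i w
    \<le> ereal (real (nh P) * \<theta> * Lc P i * (w' - z i)\<^sup>2 + gradd P v i * (w' - z i)) + hfun P i w')"

definition vpt :: "real \<Rightarrow> (nat \<Rightarrow> real) \<Rightarrow> (nat \<Rightarrow> real) \<Rightarrow> (nat \<Rightarrow> real)" where
  "vpt \<theta> z u = (\<lambda>j. \<theta> * z j + (1 - \<theta>) * u j)"

(* ARDCA run along a fixed realisation I of the index sequence (i_0, i_1, ...), I k < nh.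
   Returns (z^k, u^k). *)
fun ardca :: "('a::real_inner) dprob \<Rightarrow> (nat \<Rightarrow> real) \<Rightarrow> (nat \<Rightarrow> nat) \<Rightarrow> nat
               \<Rightarrow> (nat \<Rightarrow> real) \<times> (nat \<Rightarrow> real)" where
  "ardca P u0 I 0 = (u0, u0)"
| "ardca P u0 I (Suc k) =
     (let (z, u) = ardca P u0 I k;
          \<theta> = theta (nh P) k;
          v = vpt \<theta> z u;
          z' = z (I k := ztilde P \<theta> z v (I k))
      in (z', (\<lambda>j. v j + real (nh P) * \<theta> * (z' j - z j))))"

definition zk :: "('a::real_inner) dprob \<Rightarrow> (nat \<Rightarrow> real) \<Rightarrow> (nat \<Rightarrow> nat) \<Rightarrow> nat \<Rightarrow> nat \<Rightarrow> real" where
  "zk P u0 I k = fst (ardca P u0 I k)"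

definition vk :: "('a::real_inner) dprob \<Rightarrow> (nat \<Rightarrow> real) \<Rightarrow> (nat \<Rightarrow> nat) \<Rightarrow> nat \<Rightarrow> nat \<Rightarrow> real" where
  "vk P u0 I k = vpt (theta (nh P) k) (fst (ardca P u0 I k)) (snd (ardca P u0 I k))"

definition yk :: "('a::real_inner) dprob \<Rightarrow> (nat \<Rightarrow> real) \<Rightarrow> (nat \<Rightarrow> nat) \<Rightarrow> nat \<Rightarrow> nat \<Rightarrow> real" where
  "yk P u0 I k i =
     (let \<theta> = theta (nh P) k; z = zk P u0 I k; v = vk P u0 I k
      in - 2 * real (nh P) * \<theta> * Lc P i * (ztilde P \<theta> z v i - z i) - gradd P v i)"

definition xhat :: "('a::real_inner) dprob \<Rightarrow> (nat \<Rightarrow> real) \<Rightarrow> (nat \<Rightarrow> nat) \<Rightarrow> nat \<Rightarrow> nat \<Rightarrow> 'a" where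
  "xhat P u0 I K0 K =
     (1 / (\<Sum>k=K0..K. 1 / theta (nh P) k)) *\<^sub>R
       (\<Sum>k=K0..K. (1 / theta (nh P) k) *\<^sub>R xstar P (vk P u0 I k))"

definition yhat :: "('a::real_inner) dprob \<Rightarrow> (nat \<Rightarrow> real) \<Rightarrow> (nat \<Rightarrow> nat) \<Rightarrow> nat \<Rightarrow> nat \<Rightarrow> nat \<Rightarrow> real" where
  "yhat P u0 I K0 K i =
     (\<Sum>k=K0..K. real (pn P) * yk P u0 I k i / theta (nh P) k) / (\<Sum>k=K0..K. 1 / theta (nh P) k)"

definition infeas :: "('a::real_inner) dprob \<Rightarrow> 'a \<Rightarrow> (nat \<Rightarrow> real) \<Rightarrow> nat \<Rightarrow> real" where
  "infeas P x y i = (if i < pn P then (pA P i \<bullet> x - y i) / real (pn P)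
                     else if i < pn P + pp P then pB P (i - pn P) \<bullet> x + pb P (i - pn P)
                     else max 0 (pg P (i - pn P - pp P) x))"

(* expectation over \<xi>_K = (i_0,...,i_K), i.i.d. uniform on {0..<N} *)
definition expect_xi :: "nat \<Rightarrow> nat \<Rightarrow> ((nat \<Rightarrow> nat) \<Rightarrow> real) \<Rightarrow> real" where
  "expect_xi N K X = (\<Sum>I\<in>PiE {..K} (\<lambda>_. {..<N}). X I) / (real N) ^ (K + 1)"

end

theory Submission
  imports Defs
begin

text \<open>The potential \<open>\<Psi>\<^sub>k = (D(u\<^sup>k) - D(u\<^sup>*)) / \<theta>\<^sub>k\<^sub>-\<^sub>1\<^sup>2 + n\<^sup>2 \<parallel>z\<^sup>k - u\<^sup>*\<parallel>\<^sub>L\<^sup>2\<close>, with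
  \<open>h(u\<^sup>k)\<close> replaced by an upper estimate, decreases in conditional expectation by
  \<open>n/2 \<parallel>\<delta>\<^sup>k\<parallel>\<^sub>L\<^sup>2\<close> at every step, where \<open>\<delta>\<^sup>k\<close> is the proximal step taken in all coordinates
  (\<open>zstep\<close>). This combines the coordinate-wise smoothness of the dual function, a consequence of
  the strong convexity of the Lagrangian, with the three-point property of proximal steps.
  Hence \<open>E \<Psi>\<^sub>k \<le> \<Psi>\<^sub>0 = n\<^sup>2 C\<close> and \<open>\<Sum>\<^sub>k E \<parallel>\<delta>\<^sup>k\<parallel>\<^sub>L\<^sup>2 \<le> 2 n C\<close>.

  The optimality conditions of the proximal steps bound the \<open>j\<close>-th coordinate of the infeasibility
  of the averaged pair by \<open>2 n L\<^sub>j \<bar>\<Sum>\<^sub>k \<delta>\<^sup>k\<^sub>j\<bar> / \<Sum>\<^sub>k \<theta>\<^sub>k\<^sup>-\<^sup>1\<close>, with equality for the linear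
  constraints and by convexity for the \<open>g\<^sub>i\<close>. The sum \<open>\<Sum>\<^sub>k \<delta>\<^sup>k\<close> is \<open>n (z\<^sup>K\<^sup>+\<^sup>1 - z\<^sup>K\<^sup>0)\<close> plus
  a martingale with orthogonal increments, so its second moment is at most \<open>12 n\<^sup>2 C\<close>; and
  \<open>\<Sum>\<^sub>k \<theta>\<^sub>k\<^sup>-\<^sup>1 = \<theta>\<^sub>K\<^sup>-\<^sup>2 - \<theta>\<^sub>K\<^sub>0\<^sub>-\<^sub>1\<^sup>-\<^sup>2\<close>.\<close>

section \<open>Convex analysis\<close>

lemma strongly_convexD:
  assumes "strongly_convex \<mu> F" "0 \<le> s" "s \<le> 1"
  shows "F (s *\<^sub>R x + (1 - s) *\<^sub>R y) \<le> s * F x + (1 - s) * F y - \<mu> / 2 * s * (1 - s) * (norm (x - y))\<^sup>2"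
  using assms unfolding strongly_convex_def by auto

lemma strongly_convex_imp_convex_on:
  assumes "strongly_convex \<mu> F" "\<mu> \<ge> 0"
  shows "convex_on UNIV F"
proof (rule convex_onI)
  fix t :: real and x y
  assume t: "0 < t" "t < 1"
  have "F (t *\<^sub>R y + (1 - t) *\<^sub>R x) \<le> t * F y + (1 - t) * F x - \<mu> / 2 * t * (1 - t) * (norm (y - x))\<^sup>2"
    using strongly_convexD[OF assms(1), of t y x] t by simp
  moreover have "\<mu> / 2 * t * (1 - t) * (norm (y - x))\<^sup>2 \<ge> 0"
    using t assms(2) by simp
  ultimately show "F ((1 - t) *\<^sub>R x + t *\<^sub>R y) \<le> (1 - t) * F x + t * F y"
    by (simp add: add.commute)
qed simp

lemma strongly_convex_add_convex_on:
  assumes "strongly_convex \<mu> F" "convex_on UNIV G"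
  shows "strongly_convex \<mu> (\<lambda>x. F x + G x)"
  unfolding strongly_convex_def
proof (intro allI ballI)
  fix x y and s :: real
  assume s: "s \<in> {0..1}"
  have "G (s *\<^sub>R x + (1 - s) *\<^sub>R y) \<le> s * G x + (1 - s) * G y"
    using convex_onD[OF assms(2), of "1 - s" x y] s by simp
  with strongly_convexD[OF assms(1), of s x y] s show
    "F (s *\<^sub>R x + (1 - s) *\<^sub>R y) + G (s *\<^sub>R x + (1 - s) *\<^sub>R y)
      \<le> s * (F x + G x) + (1 - s) * (F y + G y) - \<mu> / 2 * s * (1 - s) * (norm (x - y))\<^sup>2"
    by (simp add: algebra_simps)
qed

lemma strongly_convex_min_quadratic_growth:
  assumes sc: "strongly_convex \<mu> F" and min: "\<forall>y. F x \<le> F y"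
  shows "F y \<ge> F x + \<mu> / 2 * (norm (y - x))\<^sup>2"
proof -
  have "z * (\<mu> / 2 * (norm (y - x))\<^sup>2) \<le> F y - F x" if z: "0 < z" "z < 1" for z
  proof -
    define t where "t = 1 - z"
    have t: "0 < t" "t \<le> 1" using z by (auto simp: t_def)
    have "F x \<le> F (t *\<^sub>R y + (1 - t) *\<^sub>R x)" using min by simp
    also have "\<dots> \<le> t * F y + (1 - t) * F x - \<mu> / 2 * t * (1 - t) * (norm (y - x))\<^sup>2"
      using strongly_convexD[OF sc, of t y x] t by simp
    finally have "t * ((1 - t) * (\<mu> / 2 * (norm (y - x))\<^sup>2)) \<le> t * (F y - F x)"
      by (simp add: algebra_simps)
    thus ?thesis using t by (simp add: t_def)
  qed
  thus ?thesis using field_le_mult_one_interval by force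
qed

lemma strongly_convex_has_min:
  fixes F :: "'a::euclidean_space \<Rightarrow> real"
  assumes sc: "strongly_convex \<mu> F" and mu: "\<mu> > 0"
  shows "\<exists>x. \<forall>y. F x \<le> F y"
proof -
  have cont: "continuous_on UNIV F"
    using convex_on_continuous[OF open_UNIV strongly_convex_imp_convex_on[OF sc]] mu by simp
  obtain x1 where x1: "\<forall>y\<in>cball 0 1. F x1 \<le> F y"
    using continuous_attains_inf[of "cball (0::'a) 1" F] continuous_on_subset[OF cont] by auto
  define R where "R = 1 + 2 * (F 0 - F x1) / \<mu>"
  have R1: "R \<ge> 1" using x1 mu by (simp add: R_def)
  obtain x0 where x0: "\<forall>y\<in>cball 0 R. F x0 \<le> F y"
    using continuous_attains_inf[of "cball (0::'a) R" F] continuous_on_subset[OF cont] R1 by auto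
  \<comment> \<open>Strong convexity on the segment from 0 to y, compared with the minimum on the unit ball.\<close>
  have far: "F 0 \<le> F y" if y: "norm y > R" for y
  proof -
    define r where "r = norm y"
    have r1: "r > 1" using y R1 by (simp add: r_def)
    define s where "s = 1 / r"
    have s: "0 \<le> s" "s \<le> 1" using r1 by (auto simp: s_def)
    have "F x1 \<le> F (s *\<^sub>R y + (1 - s) *\<^sub>R 0)" using x1 r1 by (simp add: s_def r_def)
    also have "\<dots> \<le> s * F y + (1 - s) * F 0 - \<mu> / 2 * s * (1 - s) * r\<^sup>2"
      using strongly_convexD[OF sc s, of y 0] by (simp add: r_def)
    finally have "r * F x1 \<le> r * (s * F y + (1 - s) * F 0 - \<mu> / 2 * s * (1 - s) * r\<^sup>2)"
      using r1 by simp
    also have "\<dots> = F y + (r - 1) * F 0 - \<mu> / 2 * (r - 1) * r"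
      using r1 by (simp add: s_def field_simps power2_eq_square)
    finally have A: "F y - F 0 \<ge> (\<mu> / 2 * (r - 1) - (F 0 - F x1)) * r"
      by (simp add: algebra_simps)
    have "\<mu> / 2 * (r - 1) \<ge> F 0 - F x1"
      using y mu by (simp add: r_def R_def field_simps)
    hence "(\<mu> / 2 * (r - 1) - (F 0 - F x1)) * r \<ge> 0" using r1 by simp
    with A show ?thesis by linarith
  qed
  have "F x0 \<le> F 0" using x0 R1 by simp
  hence "F x0 \<le> F y" for y
    using x0 far[of y] by (cases "norm y \<le> R") auto
  thus ?thesis by blast
qed

lemma convex_strict_epigraph:
  assumes cv: "convex_on UNIV g"
  shows "convex {(y, r::real). r > g y}"
  unfolding convex_def
proof (intro ballI allI impI)
  fix p q :: "'a \<times> real" and u v :: real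
  assume p: "p \<in> {(y, r). r > g y}" and q: "q \<in> {(y, r). r > g y}" and uv: "0 \<le> u" "0 \<le> v" "u + v = 1"
  obtain y1 r1 where p': "p = (y1, r1)" and r1: "r1 > g y1" using p by auto
  obtain y2 r2 where q': "q = (y2, r2)" and r2: "r2 > g y2" using q by auto
  have "g (u *\<^sub>R y1 + v *\<^sub>R y2) \<le> u * g y1 + v * g y2"
    using cv uv unfolding convex_on_def by blast
  also have "\<dots> < u * r1 + v * r2"
  proof (cases "u = 0")
    case True
    thus ?thesis using uv r2 by simp
  next
    case False
    thus ?thesis using uv r1 r2 by (intro add_less_le_mono mult_strict_left_mono mult_left_mono) auto
  qed
  finally show "u *\<^sub>R p + v *\<^sub>R q \<in> {(y, r). r > g y}" by (simp add: p' q')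
qed

lemma convex_on_has_subgradient:
  fixes g :: "'a::euclidean_space \<Rightarrow> real"
  assumes cv: "convex_on UNIV g"
  shows "\<exists>s. is_subgradient g x s"
proof -
  define T where "T = {(y, r::real). r > g y}"
  have cT: "convex T" unfolding T_def by (rule convex_strict_epigraph[OF cv])
  have "(x, g x + 1) \<in> T" by (simp add: T_def)
  moreover have "{(x, g x)} \<inter> T = {}" by (simp add: T_def)
  ultimately obtain a b where a: "a \<noteq> 0" and aS: "a \<bullet> (x, g x) \<le> b" and aT: "\<forall>p\<in>T. a \<bullet> p \<ge> b"
    using separating_hyperplane_sets[OF convex_singleton cT] by blast
  obtain a1 a2 where a': "a = (a1, a2)" by (cases a)
  have ax: "a1 \<bullet> x + a2 * g x \<le> b" using aS by (simp add: a')
  have aT': "a1 \<bullet> y + a2 * r \<ge> b" if "r > g y" for y r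
    using aT that by (auto simp: T_def a')
  \<comment> \<open>The separating hyperplane is not vertical: \<open>a2 > 0\<close>.\<close>
  have a2nn: "a2 \<ge> 0"
  proof (rule ccontr)
    assume "\<not> a2 \<ge> 0"
    define r where "r = g x + (\<bar>b\<bar> + \<bar>a1 \<bullet> x\<bar> + 1) / (- a2)"
    have "r > g x" using \<open>\<not> a2 \<ge> 0\<close> by (simp add: r_def divide_pos_neg)
    hence "a1 \<bullet> x + a2 * r \<ge> b" using aT' by blast
    moreover have "a2 * r = a2 * g x - (\<bar>b\<bar> + \<bar>a1 \<bullet> x\<bar> + 1)"
      using \<open>\<not> a2 \<ge> 0\<close> by (simp add: r_def field_simps)
    ultimately show False using ax by linarith
  qed
  have a2p: "a2 > 0"
  proof (rule ccontr)
    assume "\<not> a2 > 0"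
    hence a20: "a2 = 0" using a2nn by simp
    hence a10: "a1 \<noteq> 0" using a a' by (auto simp: zero_prod_def)
    have "a1 \<bullet> (x - a1) \<ge> b" using aT'[of "x - a1" "g (x - a1) + 1"] a20 by simp
    with ax a20 have "a1 \<bullet> a1 \<le> 0" by (simp add: inner_diff_right)
    thus False using a10 inner_gt_zero_iff[of a1] by linarith
  qed
  have "g y \<ge> g x + ((- 1 / a2) *\<^sub>R a1) \<bullet> (y - x)" for y
  proof -
    have "- (a1 \<bullet> (y - x)) \<le> a2 * (g y - g x) + e" if "e > 0" for e
      using aT'[of y "g y + e / a2"] ax that a2p by (simp add: algebra_simps inner_diff_right)
    hence "- (a1 \<bullet> (y - x)) \<le> a2 * (g y - g x)" by (rule field_le_epsilon)
    hence "- (a1 \<bullet> (y - x)) / a2 \<le> g y - g x" using a2p by (simp add: field_simps)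
    thus ?thesis by simp
  qed
  thus ?thesis unfolding is_subgradient_def by blast
qed

lemma lipschitz_of_bounded_subgradients:
  fixes g :: "'a::euclidean_space \<Rightarrow> real"
  assumes cv: "convex_on UNIV g" and bnd: "\<forall>x s. is_subgradient g x s \<longrightarrow> norm s \<le> L"
  shows "\<bar>g x - g y\<bar> \<le> L * norm (x - y)" "L \<ge> 0"
proof -
  have one: "g a - g b \<le> L * norm (a - b)" for a b
  proof -
    obtain s where s: "is_subgradient g a s" using convex_on_has_subgradient[OF cv] by blast
    have "g b \<ge> g a + s \<bullet> (b - a)" using s by (simp add: is_subgradient_def)
    moreover have "s \<bullet> (b - a) \<ge> - (norm s * norm (b - a))"
      using Cauchy_Schwarz_ineq2[of s "b - a"] by linarith
    moreover have "norm s * norm (b - a) \<le> L * norm (b - a)"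
      using bnd s by (simp add: mult_right_mono)
    ultimately show ?thesis by (simp add: norm_minus_commute)
  qed
  show "\<bar>g x - g y\<bar> \<le> L * norm (x - y)"
    using one[of x y] one[of y x] by (simp add: norm_minus_commute abs_le_iff)
  obtain s where "is_subgradient g x s" using convex_on_has_subgradient[OF cv] by blast
  thus "L \<ge> 0" using bnd by (meson norm_ge_zero order_trans)
qed

section \<open>The dual function\<close>

lemma sum_lessThan_add: "(\<Sum>j<a + b. F j) = (\<Sum>j<a. F j) + (\<Sum>j<b. F (a + j))"
  for F :: "nat \<Rightarrow> 'b::comm_monoid_add"
  by (induction b) (simp_all add: add.assoc)

lemma sum_fun_upd_diff:
  fixes F :: "nat \<Rightarrow> real"
  assumes "i < N"
  shows "(\<Sum>j<N. ((u(i := a)) j - u j) * F j) = (a - u i) * F i"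
proof -
  have "(\<Sum>j<N. ((u(i := a)) j - u j) * F j) = (\<Sum>j<N. if j = i then (a - u i) * F j else 0)"
    by (rule sum.cong) auto
  thus ?thesis using assms by simp
qed

lemma mult_sub_half_sq_le:
  fixes \<mu> :: real
  assumes "\<mu> > 0"
  shows "a * D - \<mu> / 2 * D\<^sup>2 \<le> a\<^sup>2 / (2 * \<mu>)"
proof -
  have "0 \<le> (\<mu> * D - a)\<^sup>2 / (2 * \<mu>)" using assms by simp
  also have "\<dots> = \<mu> / 2 * D\<^sup>2 - a * D + a\<^sup>2 / (2 * \<mu>)"
    using assms by (simp add: field_simps power2_eq_square)
  finally show ?thesis by linarith
qed

definition lag_coeff :: "('a::real_inner) dprob \<Rightarrow> nat \<Rightarrow> 'a \<Rightarrow> real" where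
  "lag_coeff P j x = (if j < pn P then (pA P j \<bullet> x) / real (pn P)
     else if j < pn P + pp P then pB P (j - pn P) \<bullet> x + pb P (j - pn P)
     else pg P (j - pn P - pp P) x)"

definition lag_coeff_lip :: "('a::real_inner) dprob \<Rightarrow> nat \<Rightarrow> real" where
  "lag_coeff_lip P j = (if j < pn P then norm (pA P j) / real (pn P)
     else if j < pn P + pp P then norm (pB P (j - pn P))
     else pLg P (j - pn P - pp P))"

definition dual_grad :: "('a::real_inner) dprob \<Rightarrow> (nat \<Rightarrow> real) \<Rightarrow> nat \<Rightarrow> real" where
  "dual_grad P u j = - lag_coeff P j (xstar P u)"

lemma Lag_eq_lag_coeff: "Lag P x u = pf P x + (\<Sum>j<nh P. u j * lag_coeff P j x)"
proof -
  have "(\<Sum>j<nh P. u j * lag_coeff P j x)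
      = (\<Sum>j<pn P. u j * lag_coeff P j x) + (\<Sum>j<pp P. u (pn P + j) * lag_coeff P (pn P + j) x)
        + (\<Sum>i<pm P. u (pn P + pp P + i) * lag_coeff P (pn P + pp P + i) x)"
    unfolding nh_def sum_lessThan_add ..
  also have "\<dots> = (\<Sum>j<pn P. u j * ((pA P j \<bullet> x) / real (pn P)))
        + (\<Sum>j<pp P. u (pn P + j) * (pB P j \<bullet> x + pb P j))
        + (\<Sum>i<pm P. u (pn P + pp P + i) * pg P i x)"
    by (intro arg_cong2[where f = "(+)"] sum.cong) (auto simp: lag_coeff_def)
  finally show ?thesis unfolding Lag_def by (simp add: add.assoc)
qed

lemma Lag_diff: "Lag P x u' = Lag P x u + (\<Sum>j<nh P. (u' j - u j) * lag_coeff P j x)"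
  unfolding Lag_eq_lag_coeff by (simp add: algebra_simps sum_subtractf)

lemma Lag_fun_upd: "i < nh P \<Longrightarrow> Lag P x (u(i := a)) = Lag P x u + (a - u i) * lag_coeff P i x"
  using Lag_diff[of P x "u(i := a)" u] sum_fun_upd_diff[of i "nh P" u a "\<lambda>j. lag_coeff P j x"]
  by simp

lemma Lc_eq_lag_coeff_lip: "Lc P j = (lag_coeff_lip P j)\<^sup>2 / pmu P"
  by (simp add: Lc_def lag_coeff_lip_def power_divide)

lemma has_real_derivative_of_quadratic_bound:
  fixes \<phi> :: "real \<Rightarrow> real"
  assumes "\<And>y. y \<in> S \<Longrightarrow> \<bar>\<phi> y - \<phi> x - (y - x) * G\<bar> \<le> L * (y - x)\<^sup>2"
  shows "(\<phi> has_real_derivative G) (at x within S)"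
proof -
  have "\<bar>(\<phi> y - \<phi> x) / (y - x) - G\<bar> \<le> L * \<bar>y - x\<bar>" if "y \<in> S" "y \<noteq> x" for y
  proof -
    have "\<bar>(\<phi> y - \<phi> x) / (y - x) - G\<bar> = \<bar>\<phi> y - \<phi> x - (y - x) * G\<bar> / \<bar>y - x\<bar>"
      using that by (simp add: field_simps abs_divide)
    also have "\<dots> \<le> L * (y - x)\<^sup>2 / \<bar>y - x\<bar>"
      using assms[OF that(1)] by (simp add: divide_right_mono)
    also have "\<dots> = L * \<bar>y - x\<bar>\<^sup>2 / \<bar>y - x\<bar>" by simp
    also have "\<dots> = L * \<bar>y - x\<bar>"
      using that by (simp add: power2_eq_square del: power2_abs abs_mult_self_eq)
    finally show ?thesis .
  qed
  hence "\<forall>\<^sub>F y in at x within S. norm ((\<phi> y - \<phi> x) / (y - x) - G) \<le> L * \<bar>y - x\<bar>"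
    by (auto simp: eventually_at_filter)
  moreover have "((\<lambda>y. L * \<bar>y - x\<bar>) \<longlongrightarrow> 0) (at x within S)"
    by (intro tendsto_eq_intros) auto
  ultimately have "((\<lambda>y. (\<phi> y - \<phi> x) / (y - x) - G) \<longlongrightarrow> 0) (at x within S)"
    by (rule Lim_null_comparison)
  thus ?thesis
    unfolding has_field_derivative_iff by (simp add: LIM_zero_iff)
qed

lemma real_derivative_within_unique:
  assumes "{x<..} \<subseteq> S"
    and "(f has_real_derivative c) (at x within S)" "(f has_real_derivative d) (at x within S)"
  shows "c = d"
  using has_field_derivative_subset[OF assms(2,1)] has_field_derivative_subset[OF assms(3,1)]
    tendsto_unique[OF trivial_limit_at_right_real]
  unfolding has_field_derivative_iff by blast

lemma convex_on_sum_fun: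
  assumes "finite A" "\<And>j. j \<in> A \<Longrightarrow> convex_on UNIV (F j)"
  shows "convex_on UNIV (\<lambda>x. \<Sum>j\<in>A. F j x)"
  using assms by (induction A rule: finite_induct) (auto simp: convex_on_const)

lemma assumption1D:
  assumes "assumption1 P"
  shows "pn P \<ge> 1" "pmu P > 0" "strongly_convex (pmu P) (pf P)"
    "\<exists>M. \<forall>i<pn P. M-lipschitz_on UNIV (pphi P i)"
    "\<And>i. i < pm P \<Longrightarrow> convex_on UNIV (pg P i)"
    "\<And>i. i < pm P \<Longrightarrow> \<forall>x s. is_subgradient (pg P i) x s \<longrightarrow> norm s \<le> pLg P i"
  using assms unfolding assumption1_def by auto

locale dual_problem =
  fixes P :: "('a::euclidean_space) dprob"
  assumes A1: "assumption1 P"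
begin

lemma pn_pos: "real (pn P) > 0"
  using assumption1D(1)[OF A1] by simp

lemma nh_ge_1: "nh P \<ge> 1"
  using assumption1D(1)[OF A1] by (simp add: nh_def)

lemma Lc_nonneg: "Lc P i \<ge> 0"
  using assumption1D(2)[OF A1] by (simp add: Lc_eq_lag_coeff_lip)

lemma lag_coeff_lipschitz:
  assumes j: "j < nh P"
  shows "\<bar>lag_coeff P j x - lag_coeff P j y\<bar> \<le> lag_coeff_lip P j * norm (x - y)"
proof -
  consider (A) "j < pn P" | (B) "\<not> j < pn P" "j < pn P + pp P" | (g) "\<not> j < pn P + pp P"
    by linarith
  then show ?thesis
  proof cases
    case A
    have "\<bar>pA P j \<bullet> (x - y)\<bar> / real (pn P) \<le> norm (pA P j) * norm (x - y) / real (pn P)"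
      by (simp add: Cauchy_Schwarz_ineq2 divide_right_mono)
    thus ?thesis
      using A by (simp add: lag_coeff_def lag_coeff_lip_def inner_diff_right diff_divide_distrib[symmetric])
  next
    case B
    thus ?thesis
      using Cauchy_Schwarz_ineq2[of "pB P (j - pn P)" "x - y"]
      by (simp add: lag_coeff_def lag_coeff_lip_def inner_diff_right)
  next
    case g
    define i where "i = j - pn P - pp P"
    have i: "i < pm P" using g j by (simp add: i_def nh_def)
    show ?thesis
      using lipschitz_of_bounded_subgradients(1)[OF assumption1D(5,6)[OF A1 i]] g
      by (simp add: lag_coeff_def lag_coeff_lip_def i_def)
  qed
qed

lemma Lag_strongly_convex:
  assumes u: "u \<in> dualD P"
  shows "strongly_convex (pmu P) (\<lambda>x. Lag P x u)"
proof -
  \<comment> \<open>Convexity needs the multipliers of the \<open>g\<^sub>i\<close> to be nonnegative, as they are on \<open>dualD P\<close>.\<close>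
  have "convex_on UNIV (\<lambda>x. u j * lag_coeff P j x)" if j: "j < nh P" for j
  proof (cases "j < pn P + pp P")
    case True
    thus ?thesis
      using pn_pos by (intro convex_onI) (auto simp: lag_coeff_def inner_add_right inner_diff_right field_simps)
  next
    case False
    define i where "i = j - pn P - pp P"
    have i: "i < pm P" using False j by (simp add: i_def nh_def)
    have "u j \<ge> 0" using u False j by (simp add: dualD_def)
    thus ?thesis
      using convex_on_cmul[OF _ assumption1D(5)[OF A1 i]] False by (simp add: lag_coeff_def i_def)
  qed
  hence "convex_on UNIV (\<lambda>x. \<Sum>j<nh P. u j * lag_coeff P j x)"
    by (intro convex_on_sum_fun) auto
  thus ?thesis
    unfolding Lag_eq_lag_coeff by (rule strongly_convex_add_convex_on[OF assumption1D(3)[OF A1]])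
qed

lemma Lag_xstar_le:
  assumes "u \<in> dualD P"
  shows "Lag P (xstar P u) u \<le> Lag P y u"
proof -
  have "\<exists>x. \<forall>y. Lag P x u \<le> Lag P y u"
    by (rule strongly_convex_has_min[OF Lag_strongly_convex[OF assms] assumption1D(2)[OF A1]])
  hence "\<forall>y. Lag P (xstar P u) u \<le> Lag P y u"
    unfolding xstar_def by (rule someI_ex)
  thus ?thesis by blast
qed

lemma dfun_ge_linearization:
  assumes u: "u \<in> dualD P" and u': "u' \<in> dualD P"
  shows "dfun P u' \<ge> dfun P u + (\<Sum>j<nh P. (u' j - u j) * dual_grad P u j)"
proof -
  have "Lag P (xstar P u') u' \<le> Lag P (xstar P u) u'"
    by (rule Lag_xstar_le[OF u'])
  also have "\<dots> = Lag P (xstar P u) u + (\<Sum>j<nh P. (u' j - u j) * lag_coeff P j (xstar P u))"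
    by (rule Lag_diff)
  finally show ?thesis
    by (simp add: dfun_def dual_grad_def sum_negf)
qed

text \<open>Coordinate-wise smoothness of the dual function: strong convexity of the Lagrangian makes
  \<open>xstar\<close> move by at most \<open>lag_coeff_lip P i * \<bar>s\<bar> / \<mu>\<close>.\<close>

lemma dfun_coordinate_upper_bound:
  assumes u: "u \<in> dualD P" and i: "i < nh P"
  shows "dfun P (u(i := u i + s)) \<le> dfun P u + s * dual_grad P u i + Lc P i * s\<^sup>2 / 2"
proof -
  define x where "x = xstar P u"
  define x' where "x' = xstar P (u(i := u i + s))"
  define D where "D = norm (x' - x)"
  have mu: "pmu P > 0" using assumption1D(2)[OF A1] .
  have "dfun P (u(i := u i + s)) = - Lag P x' u - s * lag_coeff P i x'"
    unfolding dfun_def x'_def using Lag_fun_upd[OF i] by simp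
  moreover have "Lag P x' u \<ge> Lag P x u + pmu P / 2 * D\<^sup>2"
    using strongly_convex_min_quadratic_growth[OF Lag_strongly_convex[OF u]] Lag_xstar_le[OF u]
    by (simp add: x_def D_def)
  moreover have "- s * lag_coeff P i x' = s * dual_grad P u i - s * (lag_coeff P i x' - lag_coeff P i x)"
    by (simp add: dual_grad_def x_def algebra_simps)
  moreover have "- s * (lag_coeff P i x' - lag_coeff P i x) \<le> \<bar>s\<bar> * lag_coeff_lip P i * D"
  proof -
    have "- s * (lag_coeff P i x' - lag_coeff P i x) \<le> \<bar>s\<bar> * \<bar>lag_coeff P i x' - lag_coeff P i x\<bar>"
      by (metis abs_ge_minus_self abs_mult mult_minus_left)
    also have "\<dots> \<le> \<bar>s\<bar> * (lag_coeff_lip P i * D)"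
      using lag_coeff_lipschitz[OF i, of x' x] by (simp add: D_def mult_left_mono)
    finally show ?thesis by simp
  qed
  moreover have "\<bar>s\<bar> * lag_coeff_lip P i * D - pmu P / 2 * D\<^sup>2 \<le> Lc P i * s\<^sup>2 / 2"
    using mult_sub_half_sq_le[OF mu, of "\<bar>s\<bar> * lag_coeff_lip P i" D]
    by (simp add: Lc_eq_lag_coeff_lip power_mult_distrib mult.commute)
  ultimately show ?thesis
    unfolding dfun_def x_def[symmetric] by linarith
qed

lemma gradd_eq_dual_grad:
  assumes u: "u \<in> dualD P" and i: "i < nh P"
  shows "gradd P u i = dual_grad P u i"
proof -
  define S where "S = (if i < pn P + pp P then UNIV else {0..} :: real set)"
  define \<phi> where "\<phi> = (\<lambda>s. dfun P (u(i := s)))"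
  have inD: "u(i := y) \<in> dualD P" if "y \<in> S" for y
    using u that i by (auto simp: S_def dualD_def split: if_splits)
  have "\<bar>\<phi> y - \<phi> (u i) - (y - u i) * dual_grad P u i\<bar> \<le> Lc P i * (y - u i)\<^sup>2" if y: "y \<in> S" for y
  proof -
    have "\<phi> y \<ge> \<phi> (u i) + (y - u i) * dual_grad P u i"
      using dfun_ge_linearization[OF u inD[OF y]] sum_fun_upd_diff[OF i, of u y "dual_grad P u"]
      by (simp add: \<phi>_def)
    moreover have "\<phi> y \<le> \<phi> (u i) + (y - u i) * dual_grad P u i + Lc P i * (y - u i)\<^sup>2 / 2"
      using dfun_coordinate_upper_bound[OF u i, of "y - u i"] by (simp add: \<phi>_def mult.commute)
    moreover have "Lc P i * (y - u i)\<^sup>2 \<ge> 0" using Lc_nonneg by simp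
    ultimately show ?thesis by (simp add: abs_le_iff)
  qed
  hence deriv: "(\<phi> has_real_derivative dual_grad P u i) (at (u i) within S)"
    by (rule has_real_derivative_of_quadratic_bound)
  have "\<not> i < pn P + pp P \<Longrightarrow> u i \<ge> 0" using u i by (simp add: dualD_def)
  hence "{u i<..} \<subseteq> S" by (auto simp: S_def)
  hence "(THE c. (\<phi> has_real_derivative c) (at (u i) within S)) = dual_grad P u i"
    using deriv real_derivative_within_unique by blast
  thus ?thesis unfolding gradd_def \<phi>_def S_def by simp
qed

end

section \<open>Proximal steps\<close>

lemma ereal_real_of_finite: "X \<noteq> -\<infinity> \<Longrightarrow> X < \<infinity> \<Longrightarrow> ereal (real_of_ereal X) = X"
  by (cases X) auto

definition proper_convex :: "(real \<Rightarrow> ereal) \<Rightarrow> bool" where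
  "proper_convex h \<longleftrightarrow> (\<forall>w. h w \<noteq> -\<infinity>) \<and> (\<forall>a b t. h a < \<infinity> \<longrightarrow> h b < \<infinity> \<longrightarrow> 0 \<le> t \<longrightarrow> t \<le> 1 \<longrightarrow>
      h ((1 - t) * a + t * b) < \<infinity> \<and>
      real_of_ereal (h ((1 - t) * a + t * b)) \<le> (1 - t) * real_of_ereal (h a) + t * real_of_ereal (h b))"

lemma proper_convexD:
  assumes "proper_convex h" "h a < \<infinity>" "h b < \<infinity>" "0 \<le> t" "t \<le> 1"
  shows "h ((1 - t) * a + t * b) < \<infinity>"
    "real_of_ereal (h ((1 - t) * a + t * b)) \<le> (1 - t) * real_of_ereal (h a) + t * real_of_ereal (h b)"
  using assms unfolding proper_convex_def by blast+

lemma proper_convex_zero: "proper_convex (\<lambda>w. 0)"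
  unfolding proper_convex_def by simp

lemma proper_convex_indicator_nonneg: "proper_convex (\<lambda>w. if w \<ge> 0 then 0 else \<infinity>)"
  unfolding proper_convex_def
  by auto

lemma prox_min_finite:
  fixes h :: "real \<Rightarrow> ereal"
  assumes hc: "proper_convex h"
    and min: "\<forall>w'. ereal (c * (wt - z0)\<^sup>2 + G * (wt - z0)) + h wt \<le> ereal (c * (w' - z0)\<^sup>2 + G * (w' - z0)) + h w'"
    and fin: "h w0 < \<infinity>"
  shows "h wt < \<infinity>"
proof (rule ccontr)
  assume "\<not> h wt < \<infinity>"
  moreover have "h w0 = ereal (real_of_ereal (h w0))"
    using ereal_real_of_finite fin hc by (simp add: proper_convex_def)
  ultimately show False using min[rule_format, of w0] by simp
qed

lemma prox_three_point:
  fixes h :: "real \<Rightarrow> ereal"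
  assumes hc: "proper_convex h" and c: "c > 0"
    and min: "\<forall>w'. ereal (c * (wt - z0)\<^sup>2 + G * (wt - z0)) + h wt \<le> ereal (c * (w' - z0)\<^sup>2 + G * (w' - z0)) + h w'"
    and fin: "h w0 < \<infinity>" and hw: "h w < \<infinity>"
  shows "c * (w - z0)\<^sup>2 + G * (w - z0) + real_of_ereal (h w)
      \<ge> c * (wt - z0)\<^sup>2 + G * (wt - z0) + real_of_ereal (h wt) + c * (w - wt)\<^sup>2"
proof -
  define q where "q = (\<lambda>w. c * (w - z0)\<^sup>2 + G * (w - z0))"
  have fe: "ereal (real_of_ereal (h x)) = h x" if "h x < \<infinity>" for x
    using ereal_real_of_finite that hc by (simp add: proper_convex_def)
  have wt: "h wt < \<infinity>" by (rule prox_min_finite[OF hc min fin])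
  have rmin: "q wt + real_of_ereal (h wt) \<le> q w + real_of_ereal (h w)" if "h w < \<infinity>" for w
  proof -
    have "ereal (q wt) + ereal (real_of_ereal (h wt)) \<le> ereal (q w) + ereal (real_of_ereal (h w))"
      unfolding fe[OF wt] fe[OF that] using min by (simp add: q_def)
    thus ?thesis by simp
  qed
  \<comment> \<open>Compare with the points \<open>(1 - t) wt + t w\<close> and let \<open>t \<rightarrow> 0\<close>.\<close>
  have "z * (c * (w - wt)\<^sup>2) \<le> q w + real_of_ereal (h w) - (q wt + real_of_ereal (h wt))"
    if z: "0 < z" "z < 1" for z
  proof -
    define t where "t = 1 - z"
    have t: "0 < t" "t \<le> 1" using z by (auto simp: t_def)
    define wx where "wx = (1 - t) * wt + t * w"
    have "q wx = (1 - t) * q wt + t * q w - t * (1 - t) * (c * (w - wt)\<^sup>2)"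
      by (simp add: q_def wx_def algebra_simps power2_eq_square)
    moreover have "q wt + real_of_ereal (h wt) \<le> q wx + real_of_ereal (h wx)"
      using rmin proper_convexD(1)[OF hc wt hw] t by (simp add: wx_def)
    moreover have "real_of_ereal (h wx) \<le> (1 - t) * real_of_ereal (h wt) + t * real_of_ereal (h w)"
      using proper_convexD(2)[OF hc wt hw] t by (simp add: wx_def)
    ultimately have "t * ((1 - t) * (c * (w - wt)\<^sup>2)) \<le> t * (q w + real_of_ereal (h w) - (q wt + real_of_ereal (h wt)))"
      by (simp add: algebra_simps)
    thus ?thesis using t by (simp add: t_def)
  qed
  hence "c * (w - wt)\<^sup>2 \<le> q w + real_of_ereal (h w) - (q wt + real_of_ereal (h wt))"
    by (rule field_le_mult_one_interval)
  thus ?thesis by (simp add: q_def)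
qed

lemma lsc_attains_min_compact:
  fixes Q :: "real \<Rightarrow> ereal"
  assumes K: "compact K" "K \<noteq> {}"
    and lsc: "\<And>w c. Q w > ereal c \<Longrightarrow> \<exists>e>0. \<forall>y. dist y w < e \<longrightarrow> Q y > ereal c"
  shows "\<exists>w\<in>K. \<forall>y\<in>K. Q w \<le> Q y"
proof (rule ccontr)
  assume "\<not> ?thesis"
  hence "\<forall>w\<in>K. \<exists>y\<in>K. Q y < Q w" by (auto simp: not_le)
  then obtain yf where yf: "\<And>w. w \<in> K \<Longrightarrow> yf w \<in> K \<and> Q (yf w) < Q w" by metis
  have "\<forall>w\<in>K. \<exists>c. Q (yf w) < ereal c \<and> ereal c < Q w" using yf ereal_dense2 by blast
  then obtain cf where cf: "\<And>w. w \<in> K \<Longrightarrow> Q (yf w) < ereal (cf w) \<and> ereal (cf w) < Q w" by metis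
  have "\<forall>w\<in>K. \<exists>e>0. \<forall>y. dist y w < e \<longrightarrow> Q y > ereal (cf w)" using cf lsc by blast
  then obtain ef where ef: "\<And>w. w \<in> K \<Longrightarrow> ef w > 0 \<and> (\<forall>y. dist y w < ef w \<longrightarrow> Q y > ereal (cf w))"
    by metis
  have "K \<subseteq> (\<Union>w\<in>K. ball w (ef w))"
    using ef by force
  then obtain T where T: "T \<subseteq> K" "finite T" "K \<subseteq> (\<Union>w\<in>T. ball w (ef w))"
    using compactE_image[OF K(1), of K "\<lambda>w. ball w (ef w)"] by auto
  have "T \<noteq> {}" using T K(2) by auto
  hence "Min (cf ` T) \<in> cf ` T" using T by (intro Min_in) auto
  \<comment> \<open>The centre \<open>w0\<close> with the least threshold is beaten by a point above every threshold.\<close>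
  then obtain w0 where w0: "w0 \<in> T" "cf w0 = Min (cf ` T)" by auto
  have "yf w0 \<in> K" using yf T w0 by auto
  then obtain w1 where w1: "w1 \<in> T" "yf w0 \<in> ball w1 (ef w1)" using T by auto
  have "Q (yf w0) > ereal (cf w1)" using ef[of w1] w1 T by (auto simp: dist_commute)
  moreover have "cf w1 \<ge> cf w0" using T(2) w1(1) w0(2) by (metis Min_le finite_imageI imageI)
  moreover have "Q (yf w0) < ereal (cf w0)" using cf[of w0] w0 T by auto
  ultimately show False by (metis ereal_less_eq(3) less_le_trans order_less_asym)
qed

lemma conj_ge: "ereal (s * z - \<phi> z) \<le> conj \<phi> s"
  unfolding conj_def by (rule SUP_upper) simp

lemma conj_neq_MInf: "conj \<phi> s \<noteq> -\<infinity>"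
  using conj_ge[of s 0 \<phi>] by auto

lemma conj_convex:
  assumes a: "conj \<phi> a = ereal A" and b: "conj \<phi> b = ereal B" and t: "0 \<le> t" "t \<le> 1"
  shows "conj \<phi> ((1 - t) * a + t * b) \<le> ereal ((1 - t) * A + t * B)"
  unfolding conj_def[of \<phi> "(1 - t) * a + t * b"]
proof (rule SUP_least)
  fix z
  have "a * z - \<phi> z \<le> A" "b * z - \<phi> z \<le> B"
    using conj_ge[of a z \<phi>] conj_ge[of b z \<phi>] a b by simp_all
  hence "(1 - t) * (a * z - \<phi> z) + t * (b * z - \<phi> z) \<le> (1 - t) * A + t * B"
    using t by (intro add_mono mult_left_mono) auto
  thus "ereal (((1 - t) * a + t * b) * z - \<phi> z) \<le> ereal ((1 - t) * A + t * B)"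
    by (simp add: algebra_simps)
qed

lemma proper_convex_scaled_conj:
  assumes k: "k > 0"
  shows "proper_convex (\<lambda>w. ereal k * conj \<phi> w)"
  unfolding proper_convex_def
proof (intro conjI allI impI)
  fix w show "ereal k * conj \<phi> w \<noteq> -\<infinity>"
    using conj_neq_MInf[of \<phi> w] k by (cases "conj \<phi> w") auto
next
  fix a b t :: real
  assume a: "ereal k * conj \<phi> a < \<infinity>" and b: "ereal k * conj \<phi> b < \<infinity>" and t: "0 \<le> t" "t \<le> 1"
  obtain A where A: "conj \<phi> a = ereal A"
    using a k conj_neq_MInf[of \<phi> a] by (cases "conj \<phi> a") auto
  obtain B where B: "conj \<phi> b = ereal B"
    using b k conj_neq_MInf[of \<phi> b] by (cases "conj \<phi> b") auto
  obtain C where C: "conj \<phi> ((1 - t) * a + t * b) = ereal C" "C \<le> (1 - t) * A + t * B"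
    using conj_convex[OF A B t] conj_neq_MInf[of \<phi> "(1 - t) * a + t * b"]
    by (cases "conj \<phi> ((1 - t) * a + t * b)") auto
  show "ereal k * conj \<phi> ((1 - t) * a + t * b) < \<infinity>" using C by simp
  have "k * C \<le> k * ((1 - t) * A + t * B)" using C k by (simp add: mult_left_mono)
  thus "real_of_ereal (ereal k * conj \<phi> ((1 - t) * a + t * b))
      \<le> (1 - t) * real_of_ereal (ereal k * conj \<phi> a) + t * real_of_ereal (ereal k * conj \<phi> b)"
    using A B C by (simp add: algebra_simps)
qed

lemma conj_eq_PInf_if_lipschitz:
  assumes lip: "M-lipschitz_on UNIV \<phi>" and s: "\<bar>s\<bar> > M"
  shows "conj \<phi> s = \<infinity>"
  unfolding conj_def
proof (rule SUP_PInfty)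
  fix n :: nat
  define t where "t = (real n + \<bar>\<phi> 0\<bar> + 1) / (\<bar>s\<bar> - M)"
  have t0: "t \<ge> 0" using s by (simp add: t_def)
  define z where "z = sgn s * t"
  have "\<phi> z \<le> \<phi> 0 + M * \<bar>z\<bar>"
    using lipschitz_onD[OF lip, of z 0] by (simp add: dist_real_def)
  moreover have "\<bar>z\<bar> \<le> t" using t0 by (simp add: z_def abs_mult abs_sgn_eq)
  moreover have "M * \<bar>z\<bar> \<le> M * t"
    using calculation(2) lip by (simp add: mult_left_mono lipschitz_on_def)
  moreover have "s * z = \<bar>s\<bar> * t" by (simp add: z_def abs_sgn mult.assoc[symmetric] sgn_mult_abs)
  moreover have "(\<bar>s\<bar> - M) * t = real n + \<bar>\<phi> 0\<bar> + 1" using s by (simp add: t_def)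
  ultimately have "s * z - \<phi> z \<ge> real n" by (simp add: algebra_simps)
  thus "\<exists>i\<in>UNIV. ereal (real n) \<le> ereal (s * i - \<phi> i)" by auto
qed

lemma conj_prox_lsc:
  assumes k: "k > 0" and gt: "ereal (c * (w - z0)\<^sup>2 + G * (w - z0)) + ereal k * conj \<phi> w > ereal r"
  shows "\<exists>e>0. \<forall>y. dist y w < e \<longrightarrow> ereal (c * (y - z0)\<^sup>2 + G * (y - z0)) + ereal k * conj \<phi> y > ereal r"
proof -
  define q where "q = (\<lambda>y::real. c * (y - z0)\<^sup>2 + G * (y - z0))"
  have iff: "ereal (q y) + ereal k * X > ereal r \<longleftrightarrow> X > ereal ((r - q y) / k)" for y X
    using k by (cases X) (auto simp: field_simps)
  have "conj \<phi> w > ereal ((r - q w) / k)" using gt iff[of w] by (simp add: q_def)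
  then obtain z where z: "ereal ((r - q w) / k) < ereal (w * z - \<phi> z)"
    unfolding conj_def less_SUP_iff by auto
  \<comment> \<open>A single affine minorant \<open>y \<mapsto> y z - \<phi> z\<close> of the conjugate already works near \<open>w\<close>.\<close>
  define F where "F = (\<lambda>y. y * z - \<phi> z - (r - q y) / k)"
  have "isCont F w" unfolding F_def q_def by (intro continuous_intros) (use k in simp)
  moreover have "F w > 0" using z by (simp add: F_def)
  ultimately have "\<forall>\<^sub>F y in at w. F y > 0" by (metis isCont_def order_tendstoD(1))
  then obtain e where e: "e > 0" "\<forall>y. y \<noteq> w \<and> dist y w < e \<longrightarrow> F y > 0"
    unfolding eventually_at by blast
  have "ereal (q y) + ereal k * conj \<phi> y > ereal r" if "F y > 0" for y
  proof -
    have "ereal ((r - q y) / k) < ereal (y * z - \<phi> z)" using that by (simp add: F_def)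
    also have "\<dots> \<le> conj \<phi> y" by (rule conj_ge)
    finally show ?thesis unfolding iff .
  qed
  with e \<open>F w > 0\<close> show ?thesis unfolding q_def by (metis dist_eq_0_iff)
qed

lemma prox_conj_exists:
  assumes k: "k > 0" and lip: "M-lipschitz_on UNIV \<phi>"
  shows "\<exists>w. \<forall>w'. ereal (c * (w - z0)\<^sup>2 + G * (w - z0)) + ereal k * conj \<phi> w
      \<le> ereal (c * (w' - z0)\<^sup>2 + G * (w' - z0)) + ereal k * conj \<phi> w'"
proof -
  define Q where "Q = (\<lambda>w. ereal (c * (w - z0)\<^sup>2 + G * (w - z0)) + ereal k * conj \<phi> w)"
  have "M \<ge> 0" using lip by (simp add: lipschitz_on_def)
  then obtain w where w: "\<forall>y\<in>{-M..M}. Q w \<le> Q y"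
    using lsc_attains_min_compact[of "{-M..M}" Q] conj_prox_lsc[OF k] unfolding Q_def by fastforce
  have "Q w \<le> Q y" for y
    using w conj_eq_PInf_if_lipschitz[OF lip, of y] k by (cases "y \<in> {-M..M}") (auto simp: Q_def)
  thus ?thesis unfolding Q_def by blast
qed

context dual_problem
begin

lemma hfun_cases:
  "hfun P j = (if j < pn P then (\<lambda>w. ereal (1 / real (pn P)) * conj (pphi P j) w)
     else if j < pn P + pp P then (\<lambda>w. 0) else (\<lambda>w. if w \<ge> 0 then 0 else \<infinity>))"
  by (auto simp: hfun_def fun_eq_iff)

lemma proper_convex_hfun: "proper_convex (hfun P j)"
  unfolding hfun_cases
  using proper_convex_scaled_conj pn_pos proper_convex_zero proper_convex_indicator_nonneg by auto

lemma hfun_neq_MInf: "hfun P j w \<noteq> -\<infinity>"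
  using proper_convex_hfun unfolding proper_convex_def by blast

lemma prox_hfun_exists:
  assumes c: "c > 0"
  shows "\<exists>w. \<forall>w'. ereal (c * (w - z0)\<^sup>2 + G * (w - z0)) + hfun P j w
      \<le> ereal (c * (w' - z0)\<^sup>2 + G * (w' - z0)) + hfun P j w'"
proof -
  define wu where "wu = z0 - G / (2 * c)"
  have quad: "c * (y - z0)\<^sup>2 + G * (y - z0) = c * (y - wu)\<^sup>2 - G\<^sup>2 / (4 * c)" for y
    using c by (simp add: wu_def field_simps power2_eq_square)
  consider (A) "j < pn P" | (B) "\<not> j < pn P" "j < pn P + pp P" | (g) "\<not> j < pn P + pp P"
    by linarith
  then show ?thesis
  proof cases
    case A
    obtain M where "\<forall>i<pn P. M-lipschitz_on UNIV (pphi P i)" using assumption1D(4)[OF A1] by blast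
    thus ?thesis using prox_conj_exists[of "1 / real (pn P)" M "pphi P j" c z0 G] A pn_pos
      unfolding hfun_cases by simp
  next
    case B
    thus ?thesis unfolding hfun_cases quad using c by (intro exI[of _ wu]) simp
  next
    case g
    have "c * (max 0 wu - wu)\<^sup>2 \<le> c * (w' - wu)\<^sup>2" if "w' \<ge> 0" for w'
    proof (cases "wu \<ge> 0")
      case True
      thus ?thesis using c by simp
    next
      case False
      hence "(0 - wu)\<^sup>2 \<le> (w' - wu)\<^sup>2" using that by (intro power_mono) auto
      thus ?thesis using c False by simp
    qed
    thus ?thesis using g unfolding hfun_cases quad by (intro exI[of _ "max 0 wu"]) auto
  qed
qed

lemma ztilde_minimises:
  assumes "real (nh P) * \<theta> * Lc P i > 0"
  shows "\<forall>w'. ereal (real (nh P) * \<theta> * Lc P i * (ztilde P \<theta> z v i - z i)\<^sup>2 + gradd P v i * (ztilde P \<theta> z v i - z i))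
      + hfun P i (ztilde P \<theta> z v i)
    \<le> ereal (real (nh P) * \<theta> * Lc P i * (w' - z i)\<^sup>2 + gradd P v i * (w' - z i)) + hfun P i w'"
  unfolding ztilde_def by (rule someI_ex) (rule prox_hfun_exists[OF assms])

end

section \<open>The step sizes \<open>\<theta>\<^sub>k\<close>\<close>

lemma theta_recurrence:
  fixes t :: real
  assumes t: "t > 0"
  defines "t' \<equiv> (sqrt (t ^ 4 + 4 * t\<^sup>2) - t\<^sup>2) / 2"
  shows "t'\<^sup>2 = (1 - t') * t\<^sup>2" "t' > 0" "t' \<le> t"
proof -
  define u where "u = t\<^sup>2"
  have u0: "u > 0" using t by (simp add: u_def)
  define s where "s = sqrt (u\<^sup>2 + 4 * u)"
  have s2: "s * s = u * u + 4 * u"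
    unfolding s_def using u0 by (simp add: power2_eq_square)
  have s0: "s \<ge> 0" unfolding s_def using u0 by simp
  have t': "t' = (s - u) / 2" unfolding t'_def s_def u_def by (simp add: power_mult[symmetric])
  have "t'\<^sup>2 = (s * s - 2 * s * u + u * u) / 4"
    unfolding t' power2_eq_square by (simp add: algebra_simps)
  also have "\<dots> = (1 - t') * u" unfolding s2 t' by (simp add: field_simps)
  finally show e: "t'\<^sup>2 = (1 - t') * t\<^sup>2" by (simp add: u_def)
  have "u * u < s * s" using s2 u0 by simp
  hence "u < s" using s0 u0 by (metis mult_mono not_less less_imp_le)
  thus tp: "t' > 0" unfolding t' by simp
  have "t'\<^sup>2 = t\<^sup>2 - t' * t\<^sup>2" using e by (simp add: algebra_simps)
  moreover have "t' * t\<^sup>2 \<ge> 0" using tp by simp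
  ultimately have "t'\<^sup>2 \<le> t\<^sup>2" by linarith
  thus "t' \<le> t" using t by (rule power2_le_imp_le[OF _ less_imp_le])
qed

context
  fixes N :: nat
  assumes N1: "N \<ge> 1"
begin

lemma theta_pos_le: "theta N k > 0 \<and> theta N k \<le> 1 / real N"
proof (induction k)
  case 0
  thus ?case using N1 by simp
next
  case (Suc k)
  thus ?case using theta_recurrence[of "theta N k"] by simp
qed

lemma theta_pos: "theta N k > 0"
  using theta_pos_le by blast

lemma mult_theta_le_1: "real N * theta N k \<le> 1"
  using theta_pos_le[of k] N1 by (simp add: field_simps)

lemma theta_le_1: "theta N k \<le> 1"
proof -
  have "1 / real N \<le> 1" using N1 by simp
  thus ?thesis using theta_pos_le[of k] by linarith
qed

lemma theta_Suc_sq: "(theta N (Suc k))\<^sup>2 = (1 - theta N (Suc k)) * (theta N k)\<^sup>2"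
  using theta_recurrence(1)[OF theta_pos[of k]] by simp

lemma inv_theta_sq_prev_eq: "inv_theta_sq_prev N k = (1 - theta N k) / (theta N k)\<^sup>2"
proof (cases k)
  case 0
  thus ?thesis using N1 by (simp add: inv_theta_sq_prev_def field_simps power2_eq_square)
next
  case (Suc k')
  thus ?thesis
    using theta_Suc_sq[of k'] theta_pos[of k] theta_pos[of k']
    by (simp add: inv_theta_sq_prev_def field_simps)
qed

lemma inv_theta_sq_prev_nonneg: "inv_theta_sq_prev N k \<ge> 0"
  using theta_le_1[of k] by (simp add: inv_theta_sq_prev_eq)

lemma inverse_theta_eq: "1 / theta N k = 1 / (theta N k)\<^sup>2 - inv_theta_sq_prev N k"
  using theta_pos[of k] unfolding inv_theta_sq_prev_eq by (simp add: field_simps power2_eq_square)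

lemma sum_inverse_theta:
  assumes "K0 \<le> K"
  shows "(\<Sum>k=K0..K. 1 / theta N k) = 1 / (theta N K)\<^sup>2 - inv_theta_sq_prev N K0"
  using assms
proof (induction K rule: dec_induct)
  case base
  show ?case using inverse_theta_eq by simp
next
  case (step K)
  thus ?case using inverse_theta_eq[of "Suc K"] by (simp add: inv_theta_sq_prev_def)
qed

lemma sum_inverse_theta_pos:
  assumes "K0 \<le> K"
  shows "(\<Sum>k=K0..K. 1 / theta N k) > 0"
  using assms theta_pos by (intro sum_pos) auto

end

text \<open>\<open>u\<^sup>k\<close> is a convex combination of \<open>z\<^sup>k\<close>, with this weight, and of a point of the domain
  of \<open>h\<close>.\<close>

fun mix_weight :: "nat \<Rightarrow> nat \<Rightarrow> real" where
  "mix_weight N 0 = 1"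
| "mix_weight N (Suc k) = real N * theta N k"

lemma mix_weight_bounds:
  assumes "N \<ge> 1"
  shows "0 \<le> mix_weight N k" "mix_weight N k \<le> 1"
  using assms by (cases k; simp add: mult_theta_le_1 theta_pos less_imp_le)+

lemma mix_weight_step_nonneg:
  assumes N1: "N \<ge> 1"
  shows "(1 - theta N k) * mix_weight N k + theta N k - real N * theta N k \<ge> 0"
proof (cases k)
  case 0
  thus ?thesis using N1 by simp
next
  case (Suc k')
  define t where "t = theta N k"
  define t' where "t' = theta N k'"
  have t: "t > 0" "t' > 0" "t \<le> 1 / real N"
    using theta_pos_le[OF N1] by (auto simp: t_def t'_def)
  have sq: "t\<^sup>2 = (1 - t) * t'\<^sup>2"
    using theta_Suc_sq[OF N1, of k'] Suc by (simp add: t_def t'_def)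
  \<comment> \<open>\<open>t / t' = sqrt (1 - t) \<ge> sqrt (1 - 1/N) \<ge> 1 - 1/N\<close>.\<close>
  have "(1 - 1 / real N)\<^sup>2 \<le> 1 - 1 / real N"
    using N1 by (simp add: power2_eq_square mult_le_cancel_left1 field_simps)
  also have "\<dots> \<le> 1 - t" using t by simp
  also have "\<dots> = (t / t')\<^sup>2" using sq t by (simp add: power_divide)
  finally have "1 - 1 / real N \<le> t / t'" by (rule power2_le_imp_le) (use t in simp)
  hence A: "real N - 1 \<le> real N * t / t'" using N1 by (simp add: field_simps)
  have "(1 - t) * t' = t\<^sup>2 / t'" using sq t by (simp add: field_simps power2_eq_square)
  hence "(1 - t) * (real N * t') + t - real N * t = real N * (t\<^sup>2 / t') + t - real N * t"
    by (metis mult.left_commute)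
  also have "\<dots> = t * (real N * t / t' + 1 - real N)"
    by (simp add: power2_eq_square algebra_simps)
  also have "\<dots> \<ge> 0" using A t by simp
  finally show ?thesis using Suc by (simp add: t_def t'_def)
qed

section \<open>The iterates of ARDCA\<close>

definition uk :: "('a::real_inner) dprob \<Rightarrow> (nat \<Rightarrow> real) \<Rightarrow> (nat \<Rightarrow> nat) \<Rightarrow> nat \<Rightarrow> nat \<Rightarrow> real" where
  "uk P u0 I k = snd (ardca P u0 I k)"

definition hval :: "('a::real_inner) dprob \<Rightarrow> nat \<Rightarrow> real \<Rightarrow> real" where
  "hval P j w = real_of_ereal (hfun P j w)"

text \<open>The estimate \<open>\<^bold>h\<^sub>k\<close> from the analysis of APPROX (Fercoq and Richtarik): it bounds
  \<open>h\<^sub>j(u\<^sup>k\<^sub>j)\<close> from above and, unlike \<open>h\<^sub>j(u\<^sup>k\<^sub>j)\<close>, evolves affinely along the iteration.\<close>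

fun hsurrogate :: "('a::real_inner) dprob \<Rightarrow> (nat \<Rightarrow> real) \<Rightarrow> (nat \<Rightarrow> nat) \<Rightarrow> nat \<Rightarrow> nat \<Rightarrow> real" where
  "hsurrogate P u0 I 0 j = hval P j (u0 j)"
| "hsurrogate P u0 I (Suc k) j = (1 - theta (nh P) k) * hsurrogate P u0 I k j
     + theta (nh P) k * hval P j (zk P u0 I k j)
     + real (nh P) * theta (nh P) k * (hval P j (zk P u0 I (Suc k) j) - hval P j (zk P u0 I k j))"

lemma zk_0 [simp]: "zk P u0 I 0 = u0"
  by (simp add: zk_def)

lemma uk_0 [simp]: "uk P u0 I 0 = u0"
  by (simp add: uk_def)

lemma zk_Suc:
  "zk P u0 I (Suc k) = (zk P u0 I k)(I k := ztilde P (theta (nh P) k) (zk P u0 I k) (vk P u0 I k) (I k))"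
  by (simp add: zk_def vk_def Let_def split: prod.split)

lemma uk_Suc:
  "uk P u0 I (Suc k) j = vk P u0 I k j + real (nh P) * theta (nh P) k * (zk P u0 I (Suc k) j - zk P u0 I k j)"
  by (simp add: zk_def uk_def vk_def Let_def split: prod.split)

lemma vk_eq: "vk P u0 I k j = theta (nh P) k * zk P u0 I k j + (1 - theta (nh P) k) * uk P u0 I k j"
  by (simp add: vk_def vpt_def zk_def uk_def)

lemma ardca_prefix_cong: "(\<forall>j<k. I j = I' j) \<Longrightarrow> ardca P u0 I k = ardca P u0 I' k"
  by (induction k) (auto simp: Let_def split: prod.split)

lemma zk_prefix_cong: "(\<forall>j<k. I j = I' j) \<Longrightarrow> zk P u0 I k = zk P u0 I' k"
  using ardca_prefix_cong[of k I I' P u0] by (simp add: zk_def)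

lemma vk_prefix_cong: "(\<forall>j<k. I j = I' j) \<Longrightarrow> vk P u0 I k = vk P u0 I' k"
  using ardca_prefix_cong[of k I I' P u0] by (simp add: vk_def)

lemma hsurrogate_prefix_cong: "(\<forall>j<k. I j = I' j) \<Longrightarrow> hsurrogate P u0 I k = hsurrogate P u0 I' k"
proof (induction k)
  case (Suc k)
  thus ?case using zk_prefix_cong[of k I I' P u0] zk_prefix_cong[of "Suc k" I I' P u0]
    by (simp add: fun_eq_iff)
qed (simp add: fun_eq_iff)

lemma zk_fun_upd_current [simp]: "zk P u0 (I(k := i)) k = zk P u0 I k"
  by (rule zk_prefix_cong) simp

lemma vk_fun_upd_current [simp]: "vk P u0 (I(k := i)) k = vk P u0 I k"
  by (rule vk_prefix_cong) simp

lemma hsurrogate_fun_upd_current [simp]: "hsurrogate P u0 (I(k := i)) k = hsurrogate P u0 I k"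
  by (rule hsurrogate_prefix_cong) simp

lemma proper_convex_momentum_step:
  fixes h :: "real \<Rightarrow> ereal"
  assumes hc: "proper_convex h" and hz: "h z < \<infinity>" and hw: "h w < \<infinity>" and hz': "h z' < \<infinity>"
    and a: "0 \<le> a" "a \<le> 1" and th: "0 \<le> \<theta>" "\<theta> \<le> 1"
    and c0: "(1 - \<theta>) * a + \<theta> - Nt \<ge> 0" and Nt: "0 \<le> Nt" "Nt \<le> 1"
    and H: "a * real_of_ereal (h z) + (1 - a) * real_of_ereal (h w) \<le> hv"
  shows "\<exists>w'. h w' < \<infinity> \<and> \<theta> * z + (1 - \<theta>) * (a * z + (1 - a) * w) + Nt * (z' - z) = Nt * z' + (1 - Nt) * w'
     \<and> Nt * real_of_ereal (h z') + (1 - Nt) * real_of_ereal (h w')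
        \<le> (1 - \<theta>) * hv + \<theta> * real_of_ereal (h z) + Nt * (real_of_ereal (h z') - real_of_ereal (h z))"
proof -
  define R where "R = (\<lambda>x. real_of_ereal (h x))"
  define c where "c = (1 - \<theta>) * a + \<theta> - Nt"
  define b where "b = (1 - \<theta>) * (1 - a)"
  have b0: "b \<ge> 0" using a th by (simp add: b_def)
  have sum: "c + b = 1 - Nt" by (simp add: c_def b_def algebra_simps)
  have ueq: "\<theta> * z + (1 - \<theta>) * (a * z + (1 - a) * w) + Nt * (z' - z) = Nt * z' + c * z + b * w"
    by (simp add: c_def b_def algebra_simps)
  have "(1 - \<theta>) * (a * R z + (1 - a) * R w) \<le> (1 - \<theta>) * hv"
    using H th by (intro mult_left_mono) (auto simp: R_def)
  hence key: "Nt * R z' + c * R z + b * R w \<le> (1 - \<theta>) * hv + \<theta> * R z + Nt * (R z' - R z)"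
    by (simp add: c_def b_def algebra_simps)
  show ?thesis
  proof (cases "Nt = 1")
    case True
    hence "c = 0" "b = 0" using sum c0 b0 unfolding c_def by linarith+
    thus ?thesis using hz' ueq key True unfolding R_def by (intro exI[of _ z']) simp
  next
    case False
    hence s: "1 - Nt > 0" using Nt by simp
    define t where "t = b / (1 - Nt)"
    have t: "0 \<le> t" "t \<le> 1" using b0 s sum c0 by (auto simp: t_def c_def field_simps)
    have bt: "b = (1 - Nt) * t" using s by (simp add: t_def)
    hence ct: "c = (1 - Nt) * (1 - t)" "b = (1 - Nt) * t" using sum by (simp_all add: algebra_simps)
    define w' where "w' = (1 - t) * z + t * w"
    have hw': "h w' < \<infinity>" and Rw': "R w' \<le> (1 - t) * R z + t * R w"
      using proper_convexD[OF hc hz hw t] unfolding w'_def R_def by blast+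
    have "(1 - Nt) * R w' \<le> (1 - Nt) * ((1 - t) * R z + t * R w)"
      using Rw' s by (intro mult_left_mono) auto
    with key have "Nt * R z' + (1 - Nt) * R w' \<le> (1 - \<theta>) * hv + \<theta> * R z + Nt * (R z' - R z)"
      unfolding ct by (simp add: algebra_simps)
    moreover have "Nt * z' + c * z + b * w = Nt * z' + (1 - Nt) * w'"
      unfolding ct w'_def by (simp add: algebra_simps)
    ultimately show ?thesis using hw' ueq unfolding R_def by (intro exI[of _ w']) simp
  qed
qed

locale ardca_run = dual_problem +
  fixes u0 :: "nat \<Rightarrow> real"
  assumes u0_dom: "\<forall>j<nh P. hfun P j (u0 j) < \<infinity>"
    and Lc_pos: "\<forall>j<nh P. Lc P j > 0"
begin

abbreviation "N \<equiv> nh P"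
abbreviation "th k \<equiv> theta (nh P) k"

lemma theta_bounds: "th k > 0" "th k \<le> 1" "real N * th k \<le> 1"
  using theta_pos[OF nh_ge_1] theta_le_1[OF nh_ge_1] mult_theta_le_1[OF nh_ge_1] by auto

lemma ztilde_dom:
  assumes j: "j < N" and z: "hfun P j (z j) < \<infinity>" and t: "\<theta> > 0"
  shows "hfun P j (ztilde P \<theta> z v j) < \<infinity>"
proof -
  have c: "real N * \<theta> * Lc P j > 0" using Lc_pos j t nh_ge_1 by simp
  show ?thesis using prox_min_finite[OF proper_convex_hfun ztilde_minimises[OF c] z] .
qed

lemma ardca_invariant:
  assumes j: "j < N"
  shows "hfun P j (zk P u0 I k j) < \<infinity> \<and>
     (\<exists>w. hfun P j w < \<infinity> \<and> uk P u0 I k j = mix_weight N k * zk P u0 I k j + (1 - mix_weight N k) * w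
        \<and> mix_weight N k * hval P j (zk P u0 I k j) + (1 - mix_weight N k) * hval P j w \<le> hsurrogate P u0 I k j)"
proof (induction k)
  case 0
  show ?case using u0_dom j by (auto simp: hval_def)
next
  case (Suc k)
  define z where "z = zk P u0 I k j"
  define z' where "z' = zk P u0 I (Suc k) j"
  obtain w where w: "hfun P j w < \<infinity>" "uk P u0 I k j = mix_weight N k * z + (1 - mix_weight N k) * w"
    "mix_weight N k * hval P j z + (1 - mix_weight N k) * hval P j w \<le> hsurrogate P u0 I k j"
    using Suc.IH unfolding z_def by blast
  have hz: "hfun P j z < \<infinity>" using Suc.IH by (simp add: z_def)
  have hz': "hfun P j z' < \<infinity>"
    using ztilde_dom[OF j _ theta_bounds(1), of "zk P u0 I k"] Suc.IH hz
    by (cases "j = I k") (simp_all add: z'_def z_def zk_Suc)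
  obtain w' where "hfun P j w' < \<infinity>"
      "th k * z + (1 - th k) * (mix_weight N k * z + (1 - mix_weight N k) * w) + real N * th k * (z' - z)
         = real N * th k * z' + (1 - real N * th k) * w'"
      "real N * th k * hval P j z' + (1 - real N * th k) * hval P j w'
         \<le> (1 - th k) * hsurrogate P u0 I k j + th k * hval P j z + real N * th k * (hval P j z' - hval P j z)"
  proof -
    have "0 \<le> th k" "th k \<le> 1" "0 \<le> real N * th k" "real N * th k \<le> 1"
      using theta_bounds[of k] by auto
    thus thesis
      using that proper_convex_momentum_step[OF proper_convex_hfun hz w(1) hz'
          mix_weight_bounds[OF nh_ge_1] _ _ mix_weight_step_nonneg[OF nh_ge_1] _ _ w(3)[unfolded hval_def]]
      unfolding hval_def by blast
  qed
  thus ?case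
    using hz' w(2) by (auto simp: uk_Suc vk_eq z_def z'_def)
qed

lemma zk_dom: "j < N \<Longrightarrow> hfun P j (zk P u0 I k j) < \<infinity>"
  using ardca_invariant by blast

lemma uk_dom:
  assumes j: "j < N"
  shows "hfun P j (uk P u0 I k j) < \<infinity>" "hval P j (uk P u0 I k j) \<le> hsurrogate P u0 I k j"
proof -
  define a where "a = mix_weight N k"
  obtain w where w: "hfun P j w < \<infinity>" "uk P u0 I k j = (1 - (1 - a)) * zk P u0 I k j + (1 - a) * w"
      "(1 - (1 - a)) * hval P j (zk P u0 I k j) + (1 - a) * hval P j w \<le> hsurrogate P u0 I k j"
    using ardca_invariant[OF j] unfolding a_def by auto
  have a: "0 \<le> 1 - a" "1 - a \<le> 1" using mix_weight_bounds[OF nh_ge_1] by (auto simp: a_def)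
  note cv = proper_convexD[OF proper_convex_hfun zk_dom[of j I k, OF j] w(1) a]
  show "hfun P j (uk P u0 I k j) < \<infinity>" using cv(1) w(2) by simp
  show "hval P j (uk P u0 I k j) \<le> hsurrogate P u0 I k j"
    using cv(2) w(3) unfolding hval_def w(2) by linarith
qed

lemma vk_dom:
  assumes j: "j < N"
  shows "hfun P j (vk P u0 I k j) < \<infinity>"
proof -
  have "hfun P j ((1 - (1 - th k)) * zk P u0 I k j + (1 - th k) * uk P u0 I k j) < \<infinity>"
    by (rule proper_convexD(1)[OF proper_convex_hfun zk_dom[OF j] uk_dom(1)[OF j]])
      (use theta_bounds[of k] in auto)
  thus ?thesis by (simp add: vk_eq)
qed

lemma in_dualD_if_hfun_finite:
  assumes "\<And>j. j < N \<Longrightarrow> hfun P j (x j) < \<infinity>"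
  shows "x \<in> dualD P"
  unfolding dualD_def
proof (intro CollectI allI impI)
  fix i assume "pn P + pp P \<le> i \<and> i < N"
  with assms[of i] show "0 \<le> x i" by (simp add: hfun_def split: if_splits)
qed

lemma uk_dualD: "uk P u0 I k \<in> dualD P" and vk_dualD: "vk P u0 I k \<in> dualD P"
  using in_dualD_if_hfun_finite uk_dom(1) vk_dom by blast+

lemma Dfun_eq_if_hfun_finite:
  assumes "\<And>j. j < N \<Longrightarrow> hfun P j (x j) < \<infinity>"
  shows "Dfun P x = ereal (dfun P x + (\<Sum>j<N. hval P j (x j)))"
proof -
  have "(\<Sum>j<N. hfun P j (x j)) = (\<Sum>j<N. ereal (hval P j (x j)))"
    using assms ereal_real_of_finite[OF hfun_neq_MInf] by (auto simp: hval_def intro: sum.cong)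
  thus ?thesis by (simp add: Dfun_def sum_ereal)
qed

end

section \<open>Averages over index sequences\<close>

text \<open>The expectation over \<open>i\<^sub>0, \<dots>, i\<^sub>k\<^sub>-\<^sub>1\<close>, meaningful for \<open>X\<close> that only depend on
  these indices, as do the \<open>k\<close>-th iterates.\<close>

definition expect_prefix :: "nat \<Rightarrow> nat \<Rightarrow> ((nat \<Rightarrow> nat) \<Rightarrow> real) \<Rightarrow> real" where
  "expect_prefix N k X = (\<Sum>I\<in>PiE {..<k} (\<lambda>_. {..<N}). X I) / real N ^ k"

definition prefix_determined :: "nat \<Rightarrow> ((nat \<Rightarrow> nat) \<Rightarrow> real) \<Rightarrow> bool" where
  "prefix_determined k X \<longleftrightarrow> (\<forall>I I'. (\<forall>j<k. I j = I' j) \<longrightarrow> X I = X I')"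

lemma expect_xi_eq_expect_prefix: "expect_xi N K X = expect_prefix N (Suc K) X"
  by (simp add: expect_xi_def expect_prefix_def lessThan_Suc_atMost)

lemma expect_prefix_0: "expect_prefix N 0 X = X (\<lambda>_. undefined)"
  by (simp add: expect_prefix_def)

lemma sum_PiE_lessThan_Suc:
  "(\<Sum>I\<in>PiE {..<Suc k} T. X I) = (\<Sum>I\<in>PiE {..<k} T. \<Sum>i\<in>T k. X (I(k := i)))"
proof -
  have "PiE {..<Suc k} T = (\<lambda>(y, g). g(k := y)) ` (T k \<times> PiE {..<k} T)"
    unfolding lessThan_Suc by (rule PiE_insert_eq)
  moreover have "inj_on (\<lambda>(y, g). g(k := y)) (T k \<times> PiE {..<k} T)"
    by (rule inj_combinator) simp
  ultimately have "(\<Sum>I\<in>PiE {..<Suc k} T. X I) = (\<Sum>(i, I)\<in>T k \<times> PiE {..<k} T. X (I(k := i)))"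
    by (simp add: sum.reindex split_def)
  also have "\<dots> = (\<Sum>I\<in>PiE {..<k} T. \<Sum>i\<in>T k. X (I(k := i)))"
    by (simp add: sum.cartesian_product[symmetric] sum.swap[of _ "T k"])
  finally show ?thesis .
qed

lemma prefix_determined_mono: "prefix_determined k X \<Longrightarrow> k \<le> k' \<Longrightarrow> prefix_determined k' X"
  unfolding prefix_determined_def by auto

context
  fixes N :: nat
  assumes N1: "N \<ge> 1"
begin

lemma expect_prefix_Suc: "expect_prefix N (Suc k) X = expect_prefix N k (\<lambda>I. (\<Sum>i<N. X (I(k := i))) / real N)"
  unfolding expect_prefix_def sum_PiE_lessThan_Suc
  using N1 by (simp add: sum_divide_distrib[symmetric] field_simps)

lemma expect_prefix_mono: "(\<And>I. X I \<le> Y I) \<Longrightarrow> expect_prefix N k X \<le> expect_prefix N k Y"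
  unfolding expect_prefix_def by (intro divide_right_mono sum_mono) auto

lemma expect_prefix_add: "expect_prefix N k (\<lambda>I. X I + Y I) = expect_prefix N k X + expect_prefix N k Y"
  unfolding expect_prefix_def by (simp add: sum.distrib add_divide_distrib)

lemma expect_prefix_cmult: "expect_prefix N k (\<lambda>I. c * X I) = c * expect_prefix N k X"
  unfolding expect_prefix_def by (simp add: sum_distrib_left[symmetric])

lemma expect_prefix_const: "expect_prefix N k (\<lambda>I. c) = c"
  unfolding expect_prefix_def using N1 by (simp add: card_PiE)

lemma expect_prefix_nonneg: "(\<And>I. X I \<ge> 0) \<Longrightarrow> expect_prefix N k X \<ge> 0"
  using expect_prefix_mono[of "\<lambda>_. 0" X k] expect_prefix_const[of k 0] by simp

lemma expect_prefix_determined: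
  assumes "k \<le> k'" "prefix_determined k X"
  shows "expect_prefix N k' X = expect_prefix N k X"
  using assms(1)
proof (induction k' rule: dec_induct)
  case (step m)
  have "X (I(m := i)) = X I" for I i
    using prefix_determined_mono[OF assms(2) step(1)] unfolding prefix_determined_def by auto
  thus ?case using step N1 by (simp add: expect_prefix_Suc)
qed simp

end

section \<open>The Lyapunov function\<close>

lemma sum_sum_fun_upd:
  fixes F :: "nat \<Rightarrow> real \<Rightarrow> real"
  shows "(\<Sum>i<N. \<Sum>j<N. F j ((z(i := a i)) j)) = (\<Sum>j<N. F j (a j) + (real N - 1) * F j (z j))"
proof -
  have "(\<Sum>i<N. F j ((z(i := a i)) j)) = F j (a j) + (real N - 1) * F j (z j)" if "j < N" for j
  proof -
    have "(\<Sum>i<N. F j ((z(i := a i)) j)) = (\<Sum>i<N. F j (z j) + (if i = j then F j (a j) - F j (z j) else 0))"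
      by (rule sum.cong) auto
    thus ?thesis using that by (simp add: sum.distrib algebra_simps)
  qed
  thus ?thesis by (subst sum.swap) (simp add: sum.distrib)
qed

context ardca_run
begin

definition zprox :: "(nat \<Rightarrow> nat) \<Rightarrow> nat \<Rightarrow> nat \<Rightarrow> real" where
  "zprox I k j = ztilde P (th k) (zk P u0 I k) (vk P u0 I k) j"

definition zstep :: "(nat \<Rightarrow> nat) \<Rightarrow> nat \<Rightarrow> nat \<Rightarrow> real" where
  "zstep I k j = zprox I k j - zk P u0 I k j"

definition zstep_sq :: "(nat \<Rightarrow> nat) \<Rightarrow> nat \<Rightarrow> real" where
  "zstep_sq I k = (\<Sum>j<N. Lc P j * (zstep I k j)\<^sup>2)"

lemma zstep_sq_nonneg: "zstep_sq I k \<ge> 0"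
  unfolding zstep_sq_def using Lc_nonneg by (simp add: sum_nonneg)

lemma zstep_prefix_cong:
  assumes "\<forall>j<k. I j = I' j"
  shows "zstep I k = zstep I' k"
  unfolding zstep_def zprox_def zk_prefix_cong[OF assms] vk_prefix_cong[OF assms] ..

lemma zk_next: "zk P u0 (I(k := i)) (Suc k) = (zk P u0 I k)(i := zprox I k i)"
  using zk_Suc[of P u0 "I(k := i)" k] by (simp add: zprox_def)

lemma uk_next: "uk P u0 (I(k := i)) (Suc k) = (vk P u0 I k)(i := vk P u0 I k i + real N * th k * zstep I k i)"
  by (auto simp: fun_eq_iff uk_Suc zk_next zstep_def)

lemma hsurrogate_next:
  "hsurrogate P u0 (I(k := i)) (Suc k) j = (1 - th k) * hsurrogate P u0 I k j + th k * hval P j (zk P u0 I k j)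
     + real N * th k * (hval P j (((zk P u0 I k)(i := zprox I k i)) j) - hval P j (zk P u0 I k j))"
  by (simp add: zk_next)

lemma zprox_three_point:
  fixes I :: "nat \<Rightarrow> nat" and k :: nat
  assumes j: "j < N" and w: "hfun P j w < \<infinity>"
  defines "c \<equiv> real N * th k * Lc P j" and "G \<equiv> dual_grad P (vk P u0 I k) j" and "z \<equiv> zk P u0 I k j"
  shows "c * (w - z)\<^sup>2 + G * (w - z) + hval P j w
      \<ge> c * (zprox I k j - z)\<^sup>2 + G * (zprox I k j - z) + hval P j (zprox I k j) + c * (w - zprox I k j)\<^sup>2"
proof -
  have c: "real N * th k * Lc P j > 0" using Lc_pos j theta_bounds(1)[of k] nh_ge_1 by simp
  have "gradd P (vk P u0 I k) j = G"
    unfolding G_def by (rule gradd_eq_dual_grad[OF vk_dualD j])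
  thus ?thesis
    using prox_three_point[OF proper_convex_hfun c
        ztilde_minimises[OF c, where z = "zk P u0 I k" and v = "vk P u0 I k"] zk_dom[OF j] w]
    by (simp add: zprox_def hval_def c_def z_def)
qed

lemma sum_dfun_next_le:
  "(\<Sum>i<N. dfun P (uk P u0 (I(k := i)) (Suc k)))
     \<le> real N * dfun P (vk P u0 I k) + real N * th k * (\<Sum>j<N. dual_grad P (vk P u0 I k) j * zstep I k j)
       + (real N * th k)\<^sup>2 / 2 * zstep_sq I k"
proof -
  have "(\<Sum>i<N. dfun P (uk P u0 (I(k := i)) (Suc k)))
      \<le> (\<Sum>i<N. dfun P (vk P u0 I k) + real N * th k * (dual_grad P (vk P u0 I k) i * zstep I k i)
          + (real N * th k)\<^sup>2 / 2 * (Lc P i * (zstep I k i)\<^sup>2))"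
  proof (rule sum_mono)
    fix i assume "i \<in> {..<N}"
    thus "dfun P (uk P u0 (I(k := i)) (Suc k)) \<le> dfun P (vk P u0 I k)
        + real N * th k * (dual_grad P (vk P u0 I k) i * zstep I k i) + (real N * th k)\<^sup>2 / 2 * (Lc P i * (zstep I k i)\<^sup>2)"
      using dfun_coordinate_upper_bound[OF vk_dualD, of i I k "real N * th k * zstep I k i"]
      by (simp add: uk_next power_mult_distrib algebra_simps)
  qed
  thus ?thesis
    by (simp add: sum.distrib sum_distrib_left[symmetric] sum_divide_distrib[symmetric] zstep_sq_def)
qed

lemma sum_hsurrogate_next:
  "(\<Sum>i<N. \<Sum>j<N. hsurrogate P u0 (I(k := i)) (Suc k) j)
     = real N * ((1 - th k) * (\<Sum>j<N. hsurrogate P u0 I k j) + th k * (\<Sum>j<N. hval P j (zprox I k j)))"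
proof -
  define F where "F = (\<lambda>j x. (1 - th k) * hsurrogate P u0 I k j + th k * hval P j (zk P u0 I k j)
      + real N * th k * (hval P j x - hval P j (zk P u0 I k j)))"
  have "(\<Sum>i<N. \<Sum>j<N. hsurrogate P u0 (I(k := i)) (Suc k) j)
      = (\<Sum>i<N. \<Sum>j<N. F j (((zk P u0 I k)(i := zprox I k i)) j))"
    unfolding hsurrogate_next F_def ..
  also have "\<dots> = (\<Sum>j<N. real N * ((1 - th k) * hsurrogate P u0 I k j + th k * hval P j (zprox I k j)))"
    unfolding sum_sum_fun_upd by (rule sum.cong) (simp_all add: F_def algebra_simps)
  finally show ?thesis
    by (simp add: sum_distrib_left[symmetric] sum.distrib)
qed

end

locale ardca_analysis = ardca_run +
  fixes ustar :: "nat \<Rightarrow> real"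
  assumes ustar_dom: "\<forall>j<nh P. hfun P j (ustar j) < \<infinity>"
    and ustar_min: "\<forall>u. Dfun P ustar \<le> Dfun P u"
begin

definition Dstar :: real where
  "Dstar = dfun P ustar + (\<Sum>j<N. hval P j (ustar j))"

definition gap :: "(nat \<Rightarrow> nat) \<Rightarrow> nat \<Rightarrow> real" where
  "gap I k = dfun P (uk P u0 I k) + (\<Sum>j<N. hsurrogate P u0 I k j) - Dstar"

definition zdist :: "(nat \<Rightarrow> nat) \<Rightarrow> nat \<Rightarrow> real" where
  "zdist I k = (\<Sum>j<N. Lc P j * (zk P u0 I k j - ustar j)\<^sup>2)"

definition lyap :: "(nat \<Rightarrow> nat) \<Rightarrow> nat \<Rightarrow> real" where
  "lyap I k = inv_theta_sq_prev N k * gap I k + (real N)\<^sup>2 * zdist I k"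

lemma ustar_dualD: "ustar \<in> dualD P"
  using in_dualD_if_hfun_finite ustar_dom by blast

lemma gap_nonneg: "gap I k \<ge> 0"
proof -
  have "Dfun P ustar = ereal Dstar"
    unfolding Dstar_def by (rule Dfun_eq_if_hfun_finite) (use ustar_dom in blast)
  moreover have "Dfun P (uk P u0 I k) = ereal (dfun P (uk P u0 I k) + (\<Sum>j<N. hval P j (uk P u0 I k j)))"
    by (rule Dfun_eq_if_hfun_finite) (use uk_dom in blast)
  ultimately have "Dstar \<le> dfun P (uk P u0 I k) + (\<Sum>j<N. hval P j (uk P u0 I k j))"
    using ustar_min by (metis ereal_less_eq(3))
  also have "\<dots> \<le> dfun P (uk P u0 I k) + (\<Sum>j<N. hsurrogate P u0 I k j)"
    using uk_dom(2) by (intro add_left_mono sum_mono) auto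
  finally show ?thesis by (simp add: gap_def)
qed

lemma zdist_nonneg: "zdist I k \<ge> 0"
  unfolding zdist_def using Lc_nonneg by (simp add: sum_nonneg)

lemma lyap_nonneg: "lyap I k \<ge> 0"
  unfolding lyap_def
  using gap_nonneg zdist_nonneg inv_theta_sq_prev_nonneg[OF nh_ge_1] by simp

lemma sum_zprox_three_point:
  fixes I :: "nat \<Rightarrow> nat" and k :: nat
  defines "G \<equiv> dual_grad P (vk P u0 I k)"
  shows "real N * th k * zstep_sq I k + (\<Sum>j<N. G j * zstep I k j) + (\<Sum>j<N. hval P j (zprox I k j))
      + real N * th k * (\<Sum>j<N. Lc P j * (zprox I k j - ustar j)\<^sup>2)
    \<le> real N * th k * zdist I k + (\<Sum>j<N. G j * (ustar j - zk P u0 I k j)) + (\<Sum>j<N. hval P j (ustar j))"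
proof -
  have "(\<Sum>j<N. real N * th k * (Lc P j * (zstep I k j)\<^sup>2) + G j * zstep I k j + hval P j (zprox I k j)
          + real N * th k * (Lc P j * (zprox I k j - ustar j)\<^sup>2))
      \<le> (\<Sum>j<N. real N * th k * (Lc P j * (zk P u0 I k j - ustar j)\<^sup>2)
          + G j * (ustar j - zk P u0 I k j) + hval P j (ustar j))"
    using zprox_three_point[OF _ ustar_dom[rule_format]]
    by (intro sum_mono) (simp add: G_def zstep_def power2_commute algebra_simps)
  thus ?thesis
    by (simp add: sum.distrib sum_distrib_left[symmetric] zstep_sq_def zdist_def)
qed

lemma dfun_momentum_bound:
  "dfun P (vk P u0 I k) + th k * (\<Sum>j<N. dual_grad P (vk P u0 I k) j * (ustar j - zk P u0 I k j))
     \<le> th k * dfun P ustar + (1 - th k) * dfun P (uk P u0 I k)"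
proof -
  define v where "v = vk P u0 I k"
  have "th k * (\<Sum>j<N. dual_grad P v j * (ustar j - zk P u0 I k j))
      = th k * (\<Sum>j<N. (ustar j - v j) * dual_grad P v j) + (1 - th k) * (\<Sum>j<N. (uk P u0 I k j - v j) * dual_grad P v j)"
    unfolding sum_distrib_left sum.distrib[symmetric]
    by (rule sum.cong) (simp_all add: v_def vk_eq algebra_simps)
  moreover have "th k * (dfun P v + (\<Sum>j<N. (ustar j - v j) * dual_grad P v j)) \<le> th k * dfun P ustar"
    using dfun_ge_linearization[OF vk_dualD ustar_dualD] theta_bounds(1)[of k]
    by (simp add: v_def)
  moreover have "(1 - th k) * (dfun P v + (\<Sum>j<N. (uk P u0 I k j - v j) * dual_grad P v j)) \<le> (1 - th k) * dfun P (uk P u0 I k)"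
    using dfun_ge_linearization[OF vk_dualD uk_dualD] theta_bounds(2)[of k]
    by (intro mult_left_mono) (simp_all add: v_def)
  ultimately show ?thesis by (simp add: v_def algebra_simps)
qed

lemma sum_zdist_next:
  "(\<Sum>i<N. zdist (I(k := i)) (Suc k)) = (\<Sum>j<N. Lc P j * (zprox I k j - ustar j)\<^sup>2) + (real N - 1) * zdist I k"
  unfolding zdist_def zk_next sum_sum_fun_upd[where F = "\<lambda>j x. Lc P j * (x - ustar j)\<^sup>2"]
  by (simp add: sum.distrib sum_distrib_left[symmetric])

lemma sum_gap_next_le:
  "(\<Sum>i<N. gap (I(k := i)) (Suc k)) / real N
     \<le> (1 - th k) * gap I k + real N * (th k)\<^sup>2 * (zdist I k - (\<Sum>j<N. Lc P j * (zprox I k j - ustar j)\<^sup>2))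
       - real N * (th k)\<^sup>2 / 2 * zstep_sq I k"
proof -
  define \<theta> where "\<theta> = th k"
  define G where "G = dual_grad P (vk P u0 I k)"
  have N0: "real N > 0" using nh_ge_1 by simp
  have "(\<Sum>i<N. gap (I(k := i)) (Suc k))
      = (\<Sum>i<N. dfun P (uk P u0 (I(k := i)) (Suc k))) + (\<Sum>i<N. \<Sum>j<N. hsurrogate P u0 (I(k := i)) (Suc k) j)
        - real N * Dstar"
    by (simp add: gap_def sum.distrib sum_subtractf)
  also have "\<dots> \<le> real N * (dfun P (vk P u0 I k) + \<theta> * (\<Sum>j<N. G j * zstep I k j) + real N * \<theta>\<^sup>2 / 2 * zstep_sq I k
        + (1 - \<theta>) * (\<Sum>j<N. hsurrogate P u0 I k j) + \<theta> * (\<Sum>j<N. hval P j (zprox I k j)) - Dstar)"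
    using sum_dfun_next_le[where I = I and k = k] unfolding sum_hsurrogate_next
    by (simp add: G_def \<theta>_def algebra_simps power2_eq_square)
  finally have A: "(\<Sum>i<N. gap (I(k := i)) (Suc k)) / real N
      \<le> dfun P (vk P u0 I k) + \<theta> * (\<Sum>j<N. G j * zstep I k j) + real N * \<theta>\<^sup>2 / 2 * zstep_sq I k
        + (1 - \<theta>) * (\<Sum>j<N. hsurrogate P u0 I k j) + \<theta> * (\<Sum>j<N. hval P j (zprox I k j)) - Dstar"
    using N0 by (simp add: field_simps)
  \<comment> \<open>The three-point inequality, scaled by \<open>\<theta>\<close>, pays for the first-order and proximal terms.\<close>
  have B: "\<theta> * (real N * \<theta> * zstep_sq I k + (\<Sum>j<N. G j * zstep I k j) + (\<Sum>j<N. hval P j (zprox I k j))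
        + real N * \<theta> * (\<Sum>j<N. Lc P j * (zprox I k j - ustar j)\<^sup>2))
      \<le> \<theta> * (real N * \<theta> * zdist I k + (\<Sum>j<N. G j * (ustar j - zk P u0 I k j)) + (\<Sum>j<N. hval P j (ustar j)))"
    using sum_zprox_three_point[where I = I and k = k] theta_bounds(1)[of k]
    by (intro mult_left_mono) (simp_all add: G_def \<theta>_def)
  have C: "dfun P (vk P u0 I k) + \<theta> * (\<Sum>j<N. G j * (ustar j - zk P u0 I k j))
      \<le> \<theta> * dfun P ustar + (1 - \<theta>) * dfun P (uk P u0 I k)"
    using dfun_momentum_bound[where I = I and k = k] by (simp add: G_def \<theta>_def)
  show ?thesis
    using A B C unfolding \<theta>_def[symmetric] gap_def Dstar_def
    by (simp add: algebra_simps power2_eq_square)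
qed

lemma lyap_one_step:
  "(\<Sum>i<N. lyap (I(k := i)) (Suc k)) / real N + real N / 2 * zstep_sq I k \<le> lyap I k"
proof -
  define \<theta> where "\<theta> = th k"
  define Rt where "Rt = (\<Sum>j<N. Lc P j * (zprox I k j - ustar j)\<^sup>2)"
  have t: "\<theta> > 0" using theta_bounds(1) by (simp add: \<theta>_def)
  have N0: "real N > 0" using nh_ge_1 by simp
  have "(\<Sum>i<N. lyap (I(k := i)) (Suc k)) / real N
      = 1 / \<theta>\<^sup>2 * ((\<Sum>i<N. gap (I(k := i)) (Suc k)) / real N) + real N * Rt + real N * (real N - 1) * zdist I k"
    using N0 unfolding lyap_def sum.distrib sum_distrib_left[symmetric] sum_zdist_next
    by (simp add: inv_theta_sq_prev_def \<theta>_def Rt_def field_simps power2_eq_square)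
  also have "\<dots> \<le> 1 / \<theta>\<^sup>2 * ((1 - \<theta>) * gap I k + real N * \<theta>\<^sup>2 * (zdist I k - Rt) - real N * \<theta>\<^sup>2 / 2 * zstep_sq I k)
      + real N * Rt + real N * (real N - 1) * zdist I k"
    using sum_gap_next_le[where I = I and k = k]
    by (intro add_right_mono mult_left_mono) (simp_all add: \<theta>_def Rt_def)
  also have "\<dots> = lyap I k - real N / 2 * zstep_sq I k"
    using t unfolding lyap_def inv_theta_sq_prev_eq[OF nh_ge_1]
    by (simp add: \<theta>_def field_simps power2_eq_square)
  finally show ?thesis by simp
qed

definition init_potential :: real where
  "init_potential = (1 - th 0) * real_of_ereal (Dfun P u0 - Dfun P ustar) + (normL P (\<lambda>i. u0 i - ustar i))\<^sup>2"

lemma lyap_0: "lyap I 0 = (real N)\<^sup>2 * init_potential"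
proof -
  have "Dfun P u0 = ereal (dfun P u0 + (\<Sum>j<N. hval P j (u0 j)))"
    by (rule Dfun_eq_if_hfun_finite) (use u0_dom in blast)
  moreover have "Dfun P ustar = ereal Dstar"
    unfolding Dstar_def by (rule Dfun_eq_if_hfun_finite) (use ustar_dom in blast)
  ultimately have gap: "gap I 0 = real_of_ereal (Dfun P u0 - Dfun P ustar)"
    by (simp add: gap_def)
  have dist: "zdist I 0 = (normL P (\<lambda>i. u0 i - ustar i))\<^sup>2"
    unfolding normL_def zdist_def using Lc_nonneg by (simp add: sum_nonneg)
  have inv: "inv_theta_sq_prev N 0 = (real N)\<^sup>2 * (1 - th 0)"
    using nh_ge_1 by (simp add: inv_theta_sq_prev_def power2_eq_square field_simps)
  show ?thesis
    unfolding lyap_def init_potential_def gap dist inv by (simp add: algebra_simps)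
qed

lemma init_potential_nonneg: "init_potential \<ge> 0"
  using lyap_nonneg[of undefined 0] nh_ge_1 unfolding lyap_0 by (simp add: zero_le_mult_iff)

lemma zdist_prefix_determined: "prefix_determined k (\<lambda>I. zdist I k)"
  unfolding prefix_determined_def
proof (intro allI impI)
  fix I I' :: "nat \<Rightarrow> nat"
  assume "\<forall>j<k. I j = I' j"
  hence "zk P u0 I k = zk P u0 I' k" by (rule zk_prefix_cong)
  thus "zdist I k = zdist I' k" unfolding zdist_def by simp
qed

lemma expect_lyap_step:
  "expect_prefix N (Suc k) (\<lambda>I. lyap I (Suc k)) + real N / 2 * expect_prefix N k (\<lambda>I. zstep_sq I k)
     \<le> expect_prefix N k (\<lambda>I. lyap I k)"
proof -
  have "expect_prefix N (Suc k) (\<lambda>I. lyap I (Suc k))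
      \<le> expect_prefix N k (\<lambda>I. lyap I k + (- (real N / 2)) * zstep_sq I k)"
    unfolding expect_prefix_Suc[OF nh_ge_1]
  proof (rule expect_prefix_mono[OF nh_ge_1])
    fix I
    show "(\<Sum>i<N. lyap (I(k := i)) (Suc k)) / real N \<le> lyap I k + - (real N / 2) * zstep_sq I k"
      using lyap_one_step[where I = I and k = k] by simp
  qed
  thus ?thesis
    unfolding expect_prefix_add[OF nh_ge_1] expect_prefix_cmult[OF nh_ge_1] by simp
qed

lemma expect_lyap_le: "expect_prefix N k (\<lambda>I. lyap I k) \<le> (real N)\<^sup>2 * init_potential"
proof (induction k)
  case 0
  thus ?case by (simp add: expect_prefix_0 lyap_0)
next
  case (Suc k)
  have "expect_prefix N k (\<lambda>I. zstep_sq I k) \<ge> 0"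
    by (rule expect_prefix_nonneg[OF nh_ge_1]) (rule zstep_sq_nonneg)
  hence "real N / 2 * expect_prefix N k (\<lambda>I. zstep_sq I k) \<ge> 0" by simp
  thus ?case using expect_lyap_step[of k] Suc by linarith
qed

lemma expect_zdist_le: "expect_prefix N k (\<lambda>I. zdist I k) \<le> init_potential"
proof -
  have "expect_prefix N k (\<lambda>I. (real N)\<^sup>2 * zdist I k) \<le> expect_prefix N k (\<lambda>I. lyap I k)"
    using gap_nonneg inv_theta_sq_prev_nonneg[OF nh_ge_1]
    by (intro expect_prefix_mono[OF nh_ge_1]) (simp add: lyap_def)
  hence "(real N)\<^sup>2 * expect_prefix N k (\<lambda>I. zdist I k) \<le> (real N)\<^sup>2 * init_potential"
    using expect_lyap_le[of k] by (simp add: expect_prefix_cmult[OF nh_ge_1])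
  thus ?thesis using nh_ge_1 by simp
qed

lemma sum_expect_zstep_sq_le:
  assumes "K0 \<le> K"
  shows "real N / 2 * (\<Sum>k=K0..K. expect_prefix N k (\<lambda>I. zstep_sq I k)) \<le> (real N)\<^sup>2 * init_potential"
proof -
  have "expect_prefix N (Suc K) (\<lambda>I. lyap I (Suc K)) + real N / 2 * (\<Sum>k=K0..K. expect_prefix N k (\<lambda>I. zstep_sq I k))
      \<le> expect_prefix N K0 (\<lambda>I. lyap I K0)"
    using assms
  proof (induction K rule: dec_induct)
    case base
    thus ?case using expect_lyap_step[of K0] by simp
  next
    case (step K)
    thus ?case using expect_lyap_step[of "Suc K"] by (simp add: distrib_left)
  qed
  moreover have "expect_prefix N (Suc K) (\<lambda>I. lyap I (Suc K)) \<ge> 0"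
    by (rule expect_prefix_nonneg[OF nh_ge_1]) (rule lyap_nonneg)
  ultimately show ?thesis using expect_lyap_le[of K0] by linarith
qed

end

section \<open>Infeasibility of the averaged primal-dual pair\<close>

lemma sq_add_le: "(x + y)\<^sup>2 \<le> 2 * x\<^sup>2 + 2 * (y::real)\<^sup>2"
  using sum_squares_bound[of x y] by (simp add: power2_sum power2_eq_square algebra_simps)

context ardca_run
begin

text \<open>Summing \<open>zstep\<close> telescopes up to the martingale \<open>drift\<close>: in expectation over \<open>i\<^sub>k\<close>,
  \<open>z\<^sup>k\<^sup>+\<^sup>1 - z\<^sup>k\<close> equals \<open>zstep I k / N\<close>, and the increments of \<open>drift\<close> are orthogonal.\<close>

definition drift :: "nat \<Rightarrow> (nat \<Rightarrow> nat) \<Rightarrow> nat \<Rightarrow> nat \<Rightarrow> real" where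
  "drift K0 I k j = (\<Sum>l\<in>{K0..<k}. zstep I l j) - real N * (zk P u0 I k j - zk P u0 I K0 j)"

definition drift_sq :: "nat \<Rightarrow> (nat \<Rightarrow> nat) \<Rightarrow> nat \<Rightarrow> real" where
  "drift_sq K0 I k = (\<Sum>j<N. Lc P j * (drift K0 I k j)\<^sup>2)"

lemma drift_next:
  assumes "K0 \<le> k"
  shows "drift K0 (I(k := i)) (Suc k) j
    = drift K0 I k j + zstep I k j - real N * ((\<lambda>_. 0)(i := zstep I k i)) j"
proof -
  have "zstep (I(k := i)) l = zstep I l" if "l \<le> k" for l
    using that by (intro zstep_prefix_cong) auto
  moreover have "zk P u0 (I(k := i)) K0 = zk P u0 I K0"
    using assms by (intro zk_prefix_cong) auto
  ultimately show ?thesis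
    using assms by (simp add: drift_def zk_next zstep_def algebra_simps)
qed

lemma sum_drift_sq_next:
  assumes "K0 \<le> k"
  shows "(\<Sum>i<N. drift_sq K0 (I(k := i)) (Suc k)) / real N = drift_sq K0 I k + (real N - 1) * zstep_sq I k"
proof -
  define a where "a = drift K0 I k"
  define b where "b = zstep I k"
  define F where "F = (\<lambda>j x. Lc P j * (a j + b j - real N * x)\<^sup>2)"
  have "(\<Sum>i<N. drift_sq K0 (I(k := i)) (Suc k)) = (\<Sum>i<N. \<Sum>j<N. F j (((\<lambda>_. 0)(i := b i)) j))"
    unfolding drift_sq_def drift_next[OF assms] F_def a_def b_def ..
  also have "\<dots> = (\<Sum>j<N. real N * (Lc P j * (a j)\<^sup>2) + real N * ((real N - 1) * (Lc P j * (b j)\<^sup>2)))"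
    unfolding sum_sum_fun_upd by (rule sum.cong) (simp_all add: F_def power2_eq_square algebra_simps)
  also have "\<dots> = real N * (drift_sq K0 I k + (real N - 1) * zstep_sq I k)"
    by (simp add: sum.distrib sum_distrib_left[symmetric] drift_sq_def zstep_sq_def a_def b_def distrib_left)
  finally show ?thesis using nh_ge_1 by simp
qed

lemma expect_drift_sq:
  assumes "K0 \<le> K"
  shows "expect_prefix N (Suc K) (\<lambda>I. drift_sq K0 I (Suc K))
    = (real N - 1) * (\<Sum>k=K0..K. expect_prefix N k (\<lambda>I. zstep_sq I k))"
proof -
  have next_eq: "expect_prefix N (Suc k) (\<lambda>I. drift_sq K0 I (Suc k))
      = expect_prefix N k (\<lambda>I. drift_sq K0 I k) + (real N - 1) * expect_prefix N k (\<lambda>I. zstep_sq I k)"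
    if "K0 \<le> k" for k
    unfolding expect_prefix_Suc[OF nh_ge_1] sum_drift_sq_next[OF that]
    by (simp add: expect_prefix_add[OF nh_ge_1] expect_prefix_cmult[OF nh_ge_1])
  show ?thesis
    using assms
  proof (induction K rule: dec_induct)
    case base
    show ?case using next_eq[of K0] by (simp add: drift_sq_def drift_def expect_prefix_const[OF nh_ge_1])
  next
    case (step K)
    thus ?case using next_eq[of "Suc K"] by (simp add: distrib_left)
  qed
qed

end

context ardca_analysis
begin

lemma sum_zstep_sq_le:
  assumes "K0 \<le> K"
  shows "(\<Sum>j<N. Lc P j * (\<Sum>k=K0..K. zstep I k j)\<^sup>2)
    \<le> 4 * (real N)\<^sup>2 * zdist I (Suc K) + 4 * (real N)\<^sup>2 * zdist I K0 + 2 * drift_sq K0 I (Suc K)"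
proof -
  have pw: "Lc P j * (\<Sum>k=K0..K. zstep I k j)\<^sup>2
      \<le> 4 * (real N)\<^sup>2 * (Lc P j * (zk P u0 I (Suc K) j - ustar j)\<^sup>2)
        + 4 * (real N)\<^sup>2 * (Lc P j * (zk P u0 I K0 j - ustar j)\<^sup>2) + 2 * (Lc P j * (drift K0 I (Suc K) j)\<^sup>2)"
    for j
  proof -
    define p where "p = zk P u0 I (Suc K) j - ustar j"
    define q where "q = zk P u0 I K0 j - ustar j"
    define d where "d = drift K0 I (Suc K) j"
    have "(\<Sum>k=K0..K. zstep I k j) = real N * (p - q) + d"
      unfolding drift_def p_def q_def d_def using assms by (simp add: atLeastLessThanSuc_atLeastAtMost)
    hence "(\<Sum>k=K0..K. zstep I k j)\<^sup>2 \<le> 2 * (real N * (p - q))\<^sup>2 + 2 * d\<^sup>2"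
      using sq_add_le by simp
    also have "\<dots> \<le> 2 * ((real N)\<^sup>2 * (2 * p\<^sup>2 + 2 * q\<^sup>2)) + 2 * d\<^sup>2"
      using sq_add_le[of p "- q"] by (simp add: power_mult_distrib mult_left_mono)
    finally have "Lc P j * (\<Sum>k=K0..K. zstep I k j)\<^sup>2
        \<le> Lc P j * (2 * ((real N)\<^sup>2 * (2 * p\<^sup>2 + 2 * q\<^sup>2)) + 2 * d\<^sup>2)"
      by (rule mult_left_mono) (rule Lc_nonneg)
    thus ?thesis by (simp add: p_def q_def d_def algebra_simps)
  qed
  have "(\<Sum>j<N. Lc P j * (\<Sum>k=K0..K. zstep I k j)\<^sup>2)
      \<le> (\<Sum>j<N. 4 * (real N)\<^sup>2 * (Lc P j * (zk P u0 I (Suc K) j - ustar j)\<^sup>2)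
        + 4 * (real N)\<^sup>2 * (Lc P j * (zk P u0 I K0 j - ustar j)\<^sup>2) + 2 * (Lc P j * (drift K0 I (Suc K) j)\<^sup>2))"
    by (rule sum_mono) (rule pw)
  thus ?thesis
    by (simp add: sum.distrib sum_distrib_left zdist_def drift_sq_def)
qed

lemma expect_sum_zstep_sq_le:
  assumes K: "K0 \<le> K"
  shows "expect_prefix N (Suc K) (\<lambda>I. \<Sum>j<N. Lc P j * (\<Sum>k=K0..K. zstep I k j)\<^sup>2)
    \<le> 12 * (real N)\<^sup>2 * init_potential"
proof -
  define S where "S = (\<Sum>k=K0..K. expect_prefix N k (\<lambda>I. zstep_sq I k))"
  have "S \<ge> 0" unfolding S_def
    by (intro sum_nonneg expect_prefix_nonneg[OF nh_ge_1] zstep_sq_nonneg)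
  hence "(real N - 1) * S \<le> real N * S" by (simp add: algebra_simps)
  moreover have "real N * S \<le> 2 * ((real N)\<^sup>2 * init_potential)"
    using sum_expect_zstep_sq_le[OF K] unfolding S_def by simp
  ultimately have drift: "expect_prefix N (Suc K) (\<lambda>I. drift_sq K0 I (Suc K)) \<le> 2 * ((real N)\<^sup>2 * init_potential)"
    unfolding expect_drift_sq[OF K] S_def[symmetric] by linarith
  have "expect_prefix N (Suc K) (\<lambda>I. zdist I K0) = expect_prefix N K0 (\<lambda>I. zdist I K0)"
    using K by (intro expect_prefix_determined[OF nh_ge_1] zdist_prefix_determined) simp
  hence "(real N)\<^sup>2 * expect_prefix N (Suc K) (\<lambda>I. zdist I K0) \<le> (real N)\<^sup>2 * init_potential"
    and "(real N)\<^sup>2 * expect_prefix N (Suc K) (\<lambda>I. zdist I (Suc K)) \<le> (real N)\<^sup>2 * init_potential"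
    using expect_zdist_le[of K0] expect_zdist_le[of "Suc K"] by (simp_all add: mult_left_mono)
  moreover have "expect_prefix N (Suc K) (\<lambda>I. \<Sum>j<N. Lc P j * (\<Sum>k=K0..K. zstep I k j)\<^sup>2)
      \<le> 4 * ((real N)\<^sup>2 * expect_prefix N (Suc K) (\<lambda>I. zdist I (Suc K)))
        + 4 * ((real N)\<^sup>2 * expect_prefix N (Suc K) (\<lambda>I. zdist I K0))
        + 2 * expect_prefix N (Suc K) (\<lambda>I. drift_sq K0 I (Suc K))"
    using expect_prefix_mono[OF nh_ge_1 sum_zstep_sq_le[OF K], of "Suc K"]
    unfolding expect_prefix_add[OF nh_ge_1] expect_prefix_cmult[OF nh_ge_1] by (simp add: mult.assoc)
  ultimately show ?thesis using drift by linarith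
qed

end

context ardca_run
begin

lemma zprox_first_order:
  assumes j: "j < N" and dom: "hfun P j (zprox I k j + s) < \<infinity>"
    and flat: "hval P j (zprox I k j + s) = hval P j (zprox I k j)"
  shows "s * (2 * real N * th k * Lc P j * zstep I k j + dual_grad P (vk P u0 I k) j) \<ge> 0"
  using zprox_three_point[where I = I and k = k, OF j dom] flat
  by (simp add: zstep_def power2_eq_square algebra_simps)

lemma dual_grad_eq_zstep:
  assumes "pn P \<le> j" "j < pn P + pp P"
  shows "- dual_grad P (vk P u0 I k) j = 2 * real N * th k * Lc P j * zstep I k j"
proof -
  have "j < N" using assms by (simp add: nh_def)
  moreover have "hfun P j w = 0" and "hval P j w = 0" for w
    using assms by (simp_all add: hfun_def hval_def)
  ultimately show ?thesis
    using zprox_first_order[of j I k 1] zprox_first_order[of j I k "- 1"] by simp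
qed

lemma dual_grad_le_zstep:
  assumes "pn P + pp P \<le> j" "j < N"
  shows "- dual_grad P (vk P u0 I k) j \<le> 2 * real N * th k * Lc P j * zstep I k j"
proof -
  have "hfun P j (zprox I k j) < \<infinity>"
    unfolding zprox_def using assms by (intro ztilde_dom zk_dom theta_bounds)
  hence "zprox I k j \<ge> 0" using assms by (simp add: hfun_def split: if_splits)
  hence "hfun P j (zprox I k j + 1) < \<infinity>" "hval P j (zprox I k j + 1) = hval P j (zprox I k j)"
    using assms by (simp_all add: hfun_def hval_def)
  thus ?thesis using zprox_first_order[where I = I and k = k and s = 1, OF assms(2)] by simp
qed

lemma yk_eq:
  assumes "j < pn P"
  shows "yk P u0 I k j = - 2 * real N * th k * Lc P j * zstep I k j - dual_grad P (vk P u0 I k) j"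
proof -
  have "j < N" using assms by (simp add: nh_def)
  thus ?thesis
    using gradd_eq_dual_grad[OF vk_dualD, of j I k] by (simp add: yk_def Let_def zstep_def zprox_def)
qed

definition avg_weight :: "nat \<Rightarrow> nat \<Rightarrow> nat \<Rightarrow> real" where
  "avg_weight K0 K k = (1 / th k) / (\<Sum>l=K0..K. 1 / th l)"

lemma avg_weight_nonneg:
  assumes "K0 \<le> K"
  shows "avg_weight K0 K k \<ge> 0"
  using theta_bounds(1)[of k] sum_inverse_theta_pos[OF nh_ge_1 assms] by (simp add: avg_weight_def)

lemma sum_avg_weight:
  assumes "K0 \<le> K"
  shows "(\<Sum>k=K0..K. avg_weight K0 K k) = 1"
  using sum_inverse_theta_pos[OF nh_ge_1 assms]
  unfolding avg_weight_def sum_divide_distrib[symmetric] by simp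

lemma xhat_eq: "xhat P u0 I K0 K = (\<Sum>k=K0..K. avg_weight K0 K k *\<^sub>R xstar P (vk P u0 I k))"
  unfolding xhat_def scaleR_sum_right scaleR_scaleR avg_weight_def by (simp add: mult.commute)

lemma yhat_eq: "yhat P u0 I K0 K j / real (pn P) = (\<Sum>k=K0..K. avg_weight K0 K k * yk P u0 I k j)"
  using pn_pos
  unfolding yhat_def avg_weight_def sum_divide_distrib[symmetric] sum_distrib_left[symmetric]
  by (simp add: sum_divide_distrib field_simps)

lemma lag_coeff_xhat_eq:
  assumes K: "K0 \<le> K" and j: "j < pn P + pp P"
  shows "lag_coeff P j (xhat P u0 I K0 K) = (\<Sum>k=K0..K. avg_weight K0 K k * - dual_grad P (vk P u0 I k) j)"
proof -
  \<comment> \<open>These coefficients are affine, and the weights sum to 1.\<close>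
  have "lag_coeff P j (\<Sum>k=K0..K. avg_weight K0 K k *\<^sub>R x k) = (\<Sum>k=K0..K. avg_weight K0 K k * lag_coeff P j (x k))"
    for x :: "nat \<Rightarrow> 'a"
  proof (cases "j < pn P")
    case True
    thus ?thesis by (simp add: lag_coeff_def inner_sum_right sum_divide_distrib)
  next
    case False
    have "(\<Sum>k=K0..K. avg_weight K0 K k * (pB P (j - pn P) \<bullet> x k + pb P (j - pn P)))
        = (\<Sum>k=K0..K. avg_weight K0 K k * (pB P (j - pn P) \<bullet> x k))
          + (\<Sum>k=K0..K. avg_weight K0 K k) * pb P (j - pn P)"
      by (simp add: sum.distrib sum_distrib_right distrib_left)
    thus ?thesis using False j sum_avg_weight[OF K] by (simp add: lag_coeff_def inner_sum_right)
  qed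
  thus ?thesis unfolding xhat_eq dual_grad_def by simp
qed

lemma lag_coeff_xhat_le:
  assumes K: "K0 \<le> K" and j: "pn P + pp P \<le> j" "j < N"
  shows "lag_coeff P j (xhat P u0 I K0 K) \<le> (\<Sum>k=K0..K. avg_weight K0 K k * - dual_grad P (vk P u0 I k) j)"
proof -
  define i where "i = j - pn P - pp P"
  have "i < pm P" using j by (simp add: i_def nh_def)
  hence "pg P i (\<Sum>k\<in>{K0..K}. avg_weight K0 K k *\<^sub>R xstar P (vk P u0 I k))
      \<le> (\<Sum>k\<in>{K0..K}. avg_weight K0 K k * pg P i (xstar P (vk P u0 I k)))"
    using convex_on_sum[OF _ _ assumption1D(5)[OF A1] sum_avg_weight[OF K]] avg_weight_nonneg[OF K] K
    by auto
  thus ?thesis using j unfolding xhat_eq dual_grad_def by (simp add: lag_coeff_def i_def)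
qed

lemma infeas_abs_le:
  assumes K: "K0 \<le> K" and j: "j < N"
  shows "\<bar>infeas P (xhat P u0 I K0 K) (yhat P u0 I K0 K) j\<bar>
    \<le> \<bar>2 * real N * Lc P j / (\<Sum>k=K0..K. 1 / th k) * (\<Sum>k=K0..K. zstep I k j)\<bar>"
proof -
  define RHS where "RHS = (\<Sum>k=K0..K. avg_weight K0 K k * (2 * real N * th k * Lc P j * zstep I k j))"
  have "RHS = 2 * real N * Lc P j / (\<Sum>k=K0..K. 1 / th k) * (\<Sum>k=K0..K. zstep I k j)"
    unfolding RHS_def avg_weight_def sum_distrib_left
    using theta_bounds(1)[THEN less_imp_neq] sum_inverse_theta_pos[OF nh_ge_1 K]
    by (intro sum.cong) (simp_all add: field_simps)
  moreover have "\<bar>infeas P (xhat P u0 I K0 K) (yhat P u0 I K0 K) j\<bar> \<le> \<bar>RHS\<bar>"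
  proof -
    consider (A) "j < pn P" | (B) "pn P \<le> j" "j < pn P + pp P" | (g) "pn P + pp P \<le> j" by linarith
    then show ?thesis
    proof cases
      case A
      have "infeas P (xhat P u0 I K0 K) (yhat P u0 I K0 K) j
          = lag_coeff P j (xhat P u0 I K0 K) - yhat P u0 I K0 K j / real (pn P)"
        using A by (simp add: infeas_def lag_coeff_def diff_divide_distrib)
      also have "\<dots> = RHS"
        using A unfolding lag_coeff_xhat_eq[OF K trans_less_add1[OF A]] yhat_eq RHS_def sum_subtractf[symmetric]
        by (intro sum.cong) (simp_all add: yk_eq algebra_simps)
      finally show ?thesis by simp
    next
      case B
      have "infeas P (xhat P u0 I K0 K) (yhat P u0 I K0 K) j = lag_coeff P j (xhat P u0 I K0 K)"
        using B by (simp add: infeas_def lag_coeff_def)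
      also have "\<dots> = RHS"
        unfolding lag_coeff_xhat_eq[OF K B(2)] RHS_def using B by (simp add: dual_grad_eq_zstep)
      finally show ?thesis by simp
    next
      case g
      have "lag_coeff P j (xhat P u0 I K0 K) \<le> RHS"
        using lag_coeff_xhat_le[OF K g j] unfolding RHS_def
        by (rule order_trans) (intro sum_mono mult_left_mono dual_grad_le_zstep[OF g j] avg_weight_nonneg[OF K])
      thus ?thesis using g by (simp add: infeas_def lag_coeff_def)
    qed
  qed
  ultimately show ?thesis by simp
qed

lemma normL_dual_infeas_sq_le:
  assumes K: "K0 \<le> K"
  shows "(normL_dual P (infeas P (xhat P u0 I K0 K) (yhat P u0 I K0 K)))\<^sup>2
    \<le> 4 * (real N)\<^sup>2 / (\<Sum>k=K0..K. 1 / th k)\<^sup>2 * (\<Sum>j<N. Lc P j * (\<Sum>k=K0..K. zstep I k j)\<^sup>2)"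
proof -
  define f where "f = infeas P (xhat P u0 I K0 K) (yhat P u0 I K0 K)"
  define S where "S = (\<Sum>k=K0..K. 1 / th k)"
  have "(f j)\<^sup>2 / Lc P j \<le> 4 * (real N)\<^sup>2 / S\<^sup>2 * (Lc P j * (\<Sum>k=K0..K. zstep I k j)\<^sup>2)" if "j < N" for j
  proof -
    have L: "Lc P j > 0" using Lc_pos that by simp
    have "(f j)\<^sup>2 \<le> (2 * real N * Lc P j / S * (\<Sum>k=K0..K. zstep I k j))\<^sup>2"
      using abs_le_square_iff[THEN iffD1, OF infeas_abs_le[where I = I, OF K that]]
      unfolding f_def S_def .
    hence "(f j)\<^sup>2 / Lc P j \<le> (2 * real N * Lc P j / S * (\<Sum>k=K0..K. zstep I k j))\<^sup>2 / Lc P j"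
      using L by (simp add: divide_right_mono)
    also have "\<dots> = 4 * (real N)\<^sup>2 / S\<^sup>2 * (Lc P j * (\<Sum>k=K0..K. zstep I k j)\<^sup>2)"
      using L by (simp add: power2_eq_square field_simps)
    finally show ?thesis .
  qed
  hence "(\<Sum>j<N. (f j)\<^sup>2 / Lc P j) \<le> (\<Sum>j<N. 4 * (real N)\<^sup>2 / S\<^sup>2 * (Lc P j * (\<Sum>k=K0..K. zstep I k j)\<^sup>2))"
    by (intro sum_mono) simp
  also have "\<dots> = 4 * (real N)\<^sup>2 / S\<^sup>2 * (\<Sum>j<N. Lc P j * (\<Sum>k=K0..K. zstep I k j)\<^sup>2)"
    by (simp add: sum_distrib_left)
  finally have "(\<Sum>j<N. (f j)\<^sup>2 / Lc P j) \<le> 4 * (real N)\<^sup>2 / S\<^sup>2 * (\<Sum>j<N. Lc P j * (\<Sum>k=K0..K. zstep I k j)\<^sup>2)" .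
  moreover have "(\<Sum>j<N. (f j)\<^sup>2 / Lc P j) \<ge> 0"
    using Lc_pos by (intro sum_nonneg) (simp add: less_imp_le)
  ultimately show ?thesis unfolding normL_dual_def f_def S_def by simp
qed

end

context ardca_analysis
begin

lemma sqrt_expect_infeas_le:
  assumes K: "K0 \<le> K"
  shows "sqrt (expect_xi N K (\<lambda>I. (normL_dual P (infeas P (xhat P u0 I K0 K) (yhat P u0 I K0 K)))\<^sup>2))
    \<le> sqrt 48 * (real N)\<^sup>2 * sqrt init_potential / (1 / (th K)\<^sup>2 - inv_theta_sq_prev N K0)"
proof -
  define S where "S = 1 / (th K)\<^sup>2 - inv_theta_sq_prev N K0"
  have S: "(\<Sum>k=K0..K. 1 / th k) = S" unfolding S_def by (rule sum_inverse_theta[OF nh_ge_1 K])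
  have "expect_xi N K (\<lambda>I. (normL_dual P (infeas P (xhat P u0 I K0 K) (yhat P u0 I K0 K)))\<^sup>2)
      \<le> expect_prefix N (Suc K) (\<lambda>I. 4 * (real N)\<^sup>2 / S\<^sup>2 * (\<Sum>j<N. Lc P j * (\<Sum>k=K0..K. zstep I k j)\<^sup>2))"
    unfolding expect_xi_eq_expect_prefix
    by (rule expect_prefix_mono[OF nh_ge_1]) (use normL_dual_infeas_sq_le[OF K] S in simp)
  also have "\<dots> \<le> 4 * (real N)\<^sup>2 / S\<^sup>2 * (12 * (real N)\<^sup>2 * init_potential)"
    unfolding expect_prefix_cmult[OF nh_ge_1]
    by (rule mult_left_mono[OF expect_sum_zstep_sq_le[OF K]]) simp
  also have "\<dots> = (sqrt 48 * (real N)\<^sup>2 * sqrt init_potential / S)\<^sup>2"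
    using init_potential_nonneg by (simp add: power_mult_distrib power_divide algebra_simps)
  finally have "sqrt (expect_xi N K (\<lambda>I. (normL_dual P (infeas P (xhat P u0 I K0 K) (yhat P u0 I K0 K)))\<^sup>2))
      \<le> \<bar>sqrt 48 * (real N)\<^sup>2 * sqrt init_potential / S\<bar>"
    unfolding real_sqrt_abs[symmetric] by (rule real_sqrt_le_mono)
  moreover have "S > 0" using sum_inverse_theta_pos[OF nh_ge_1 K] S by simp
  ultimately show ?thesis using init_potential_nonneg by (simp add: S_def)
qed

end

lemma Dfun_finite_imp_hfun_finite:
  assumes "Dfun P u < \<infinity>" "j < nh P"
  shows "hfun P j (u j) < \<infinity>"
proof (rule ccontr)
  assume "\<not> hfun P j (u j) < \<infinity>"
  hence "hfun P j (u j) = \<infinity>" by simp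
  hence "(\<Sum>i<nh P. hfun P i (u i)) = \<infinity>" using assms(2) by (subst sum_Pinfty) auto
  thus False using assms(1) by (simp add: Dfun_def)
qed

theorem lemma8:
  fixes P :: "('a::euclidean_space) dprob"
    and u0 ustar :: "nat \<Rightarrow> real"
    and K0 K :: nat
  assumes A1: "assumption1 P"
    and Lpos: "\<forall>i<nh P. Lc P i > 0"
    and u0D: "u0 \<in> dualD P"
    and umin: "\<forall>u. Dfun P ustar \<le> Dfun P u"
    and K0K: "K0 \<le> K"
  shows "Dfun P u0 < \<infinity> \<longrightarrow>
    sqrt (expect_xi (nh P) K
            (\<lambda>I. (normL_dual P (infeas P (xhat P u0 I K0 K) (yhat P u0 I K0 K)))\<^sup>2))
    \<le> sqrt 48 * (real (nh P))\<^sup>2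
        * sqrt ((1 - theta (nh P) 0) * real_of_ereal (Dfun P u0 - Dfun P ustar) + (normL P (\<lambda>i. u0 i - ustar i))\<^sup>2)
        / (1 / (theta (nh P) K)\<^sup>2 - inv_theta_sq_prev (nh P) K0)"
proof
  assume D0: "Dfun P u0 < \<infinity>"
  hence "Dfun P ustar < \<infinity>" using umin by (meson le_less_trans)
  interpret ardca_analysis P u0 ustar
    by unfold_locales
      (use A1 Lpos umin Dfun_finite_imp_hfun_finite[OF D0] Dfun_finite_imp_hfun_finite[OF \<open>Dfun P ustar < \<infinity>\<close>]
        in auto)
  show "sqrt (expect_xi N K (\<lambda>I. (normL_dual P (infeas P (xhat P u0 I K0 K) (yhat P u0 I K0 K)))\<^sup>2))
    \<le> sqrt 48 * (real N)\<^sup>2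
        * sqrt ((1 - th 0) * real_of_ereal (Dfun P u0 - Dfun P ustar) + (normL P (\<lambda>i. u0 i - ustar i))\<^sup>2)
        / (1 / (th K)\<^sup>2 - inv_theta_sq_prev N K0)"
    using sqrt_expect_infeas_le[OF K0K] unfolding init_potential_def .
qed
end
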